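(* Let $(J,D)\in\mathcal{N}(n)$ be a threshold-linear network with $-D+J=-\mathbf{1}$, the $n\times n$ matrix with all entries $-1$. Then every subset $\sigma\subset\{1,\dots,n\}$ with $|\sigma|\ge2$ is a flexible clique of $(J,D)$; in particular $\mathrm{flex}(J,D)=2^n-n-1$.
   Context: A threshold-linear network $(J,D)$ on $n$ neurons: $J$ real $n\times n$, $D=\operatorname{diag}(\tau_1^{-1},\dots,\tau_n^{-1})$ with $\tau_i>0$, $-D+J$ with strictly negative diagonal, dynamics $\dot x=-Dx+[Jx+b]_+$ ($x\in\mathbb{R}^n_{\ge0}$, $b\in\mathbb{R}^n$ constant, $[y]_+=\max(y,0)$ coordinatewise); $\mathcal{N}(n)$ is the set of all such networks (no connectivity constraint, so every subset of $\{1,\dots,n\}$ is a clique). A non-empty $\sigma$ is a stable set if for some $b$ there is an asymptotically stable fixed point $x^*$ with $\{i:x^*_i>0\}=\sigma$; a marginal set if it is not stable but for some $b$ there is a stable fixed point with support $\sigma$; an unstable set otherwise. An $\varepsilon$-perturbation is a real $n\times n$ matrix $A$ with all $|A_{ij}|\le\varepsilon$. A maximally stable clique is a stable set not properly contained in another stable set; a minimally unstable clique is an unstable set not properly containing another unstable set. $\sigma$ is a flexible clique of $(J,D)$ if for every $\varepsilon>0$ there exist $\varepsilon$-perturbations $A_s,A_u$ such that $\sigma$ is a maximally stable clique of $(J+A_s,D)$ and a minimally unstable clique of $(J+A_u,D)$. $\mathrm{flex}(J,D)$ is the number of flexible cliques. *)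

theory Defs
  imports "HOL-Analysis.Analysis"
begin

text \<open>Threshold-linear networks on n neurons, n = CARD('n). Vectors are real^'n,
  matrices real^'n^'n. D is the diagonal matrix diag(1/tau_i).\<close>

definition tln_network :: "real^'n::finite^'n \<Rightarrow> real^'n^'n \<Rightarrow> bool" where
  "tln_network J D \<longleftrightarrow> (\<forall>i j. i \<noteq> j \<longrightarrow> D $ i $ j = 0) \<and> (\<forall>i. D $ i $ i > 0)
     \<and> (\<forall>i. (- D + J) $ i $ i < 0)"

definition relu_vec :: "real^'n::finite \<Rightarrow> real^'n" where
  "relu_vec y = (\<chi> i. max (y $ i) 0)"

definition tln_field :: "real^'n::finite^'n \<Rightarrow> real^'n^'n \<Rightarrow> real^'n \<Rightarrow> real^'n \<Rightarrow> real^'n" where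
  "tln_field J D b x = - (D *v x) + relu_vec (J *v x + b)"

definition nonneg_vec :: "real^'n::finite \<Rightarrow> bool" where
  "nonneg_vec x \<longleftrightarrow> (\<forall>i. 0 \<le> x $ i)"

definition supp_vec :: "real^'n::finite \<Rightarrow> 'n set" where
  "supp_vec x = {i. 0 < x $ i}"

definition tln_solution :: "real^'n::finite^'n \<Rightarrow> real^'n^'n \<Rightarrow> real^'n \<Rightarrow> real^'n \<Rightarrow> (real \<Rightarrow> real^'n) \<Rightarrow> bool" where
  "tln_solution J D b x0 x \<longleftrightarrow> x 0 = x0 \<and>
     (\<forall>t\<ge>0. (x has_vector_derivative tln_field J D b (x t)) (at t within {0..}))"

definition tln_fixed_point :: "real^'n::finite^'n \<Rightarrow> real^'n^'n \<Rightarrow> real^'n \<Rightarrow> real^'n \<Rightarrow> bool" where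
  "tln_fixed_point J D b xs \<longleftrightarrow> nonneg_vec xs \<and> tln_field J D b xs = 0"

definition tln_stable_fp :: "real^'n::finite^'n \<Rightarrow> real^'n^'n \<Rightarrow> real^'n \<Rightarrow> real^'n \<Rightarrow> bool" where
  "tln_stable_fp J D b xs \<longleftrightarrow> tln_fixed_point J D b xs \<and>
     (\<forall>e>0. \<exists>d>0. \<forall>x0 x. nonneg_vec x0 \<and> dist x0 xs < d \<and> tln_solution J D b x0 x
        \<longrightarrow> (\<forall>t\<ge>0. dist (x t) xs < e))"

definition tln_asymp_stable_fp :: "real^'n::finite^'n \<Rightarrow> real^'n^'n \<Rightarrow> real^'n \<Rightarrow> real^'n \<Rightarrow> bool" where
  "tln_asymp_stable_fp J D b xs \<longleftrightarrow> tln_stable_fp J D b xs \<and>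
     (\<exists>d>0. \<forall>x0 x. nonneg_vec x0 \<and> dist x0 xs < d \<and> tln_solution J D b x0 x
        \<longrightarrow> (x \<longlongrightarrow> xs) at_top)"

definition stable_set :: "real^'n::finite^'n \<Rightarrow> real^'n^'n \<Rightarrow> 'n set \<Rightarrow> bool" where
  "stable_set J D \<sigma> \<longleftrightarrow> \<sigma> \<noteq> {} \<and> (\<exists>b xs. tln_asymp_stable_fp J D b xs \<and> supp_vec xs = \<sigma>)"

definition marginal_set :: "real^'n::finite^'n \<Rightarrow> real^'n^'n \<Rightarrow> 'n set \<Rightarrow> bool" where
  "marginal_set J D \<sigma> \<longleftrightarrow> \<sigma> \<noteq> {} \<and> \<not> stable_set J D \<sigma> \<and>
     (\<exists>b xs. tln_stable_fp J D b xs \<and> supp_vec xs = \<sigma>)"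

definition unstable_set :: "real^'n::finite^'n \<Rightarrow> real^'n^'n \<Rightarrow> 'n set \<Rightarrow> bool" where
  "unstable_set J D \<sigma> \<longleftrightarrow> \<sigma> \<noteq> {} \<and> \<not> stable_set J D \<sigma> \<and> \<not> marginal_set J D \<sigma>"

definition maximally_stable_clique :: "real^'n::finite^'n \<Rightarrow> real^'n^'n \<Rightarrow> 'n set \<Rightarrow> bool" where
  "maximally_stable_clique J D \<sigma> \<longleftrightarrow> stable_set J D \<sigma> \<and>
     \<not> (\<exists>\<tau>. \<sigma> \<subset> \<tau> \<and> stable_set J D \<tau>)"

definition minimally_unstable_clique :: "real^'n::finite^'n \<Rightarrow> real^'n^'n \<Rightarrow> 'n set \<Rightarrow> bool" where
  "minimally_unstable_clique J D \<sigma> \<longleftrightarrow> unstable_set J D \<sigma> \<and>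
     \<not> (\<exists>\<tau>. \<tau> \<subset> \<sigma> \<and> unstable_set J D \<tau>)"

definition eps_perturbation :: "real \<Rightarrow> real^'n::finite^'n \<Rightarrow> bool" where
  "eps_perturbation e A \<longleftrightarrow> (\<forall>i j. \<bar>A $ i $ j\<bar> \<le> e)"

definition flexible_clique :: "real^'n::finite^'n \<Rightarrow> real^'n^'n \<Rightarrow> 'n set \<Rightarrow> bool" where
  "flexible_clique J D \<sigma> \<longleftrightarrow> (\<forall>e>0. \<exists>As Au. eps_perturbation e As \<and> eps_perturbation e Au \<and>
     maximally_stable_clique (J + As) D \<sigma> \<and> minimally_unstable_clique (J + Au) D \<sigma>)"

definition flex :: "real^'n::finite^'n \<Rightarrow> real^'n^'n \<Rightarrow> nat" where
  "flex J D = card {\<sigma>. flexible_clique J D \<sigma>}"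

end

theory Submission
  imports Defs
begin

text \<open>For J - D = -1 every principal quadratic form of J - D is -(\<Sum>y)^2, negative semidefinite
  but singular on every clique with at least two neurons, so arbitrarily small perturbations can tip
  it either way. Lowering the diagonal on \<sigma> makes \<sigma> negative definite, hence stable (weighted
  quadratic Lyapunov function at an explicit nondegenerate fixed point); inhibiting one neuron of \<sigma>
  from outside gives every larger clique a line of fixed points, so none of them is stable. Adding
  \<epsilon> (\<beta> w w^T - I) on \<sigma>, with w orthogonal to the all-ones vector, makes w an expanding direction
  of every fixed point supported on \<sigma> (trajectories leave along the ray, continued by Picard
  iteration), while the proper subcliques stay negative definite. A single neuron keeps a
  negative diagonal entry under any small perturbation and is never unstable.\<close>

section \<open>Solutions of globally Lipschitz autonomous equations\<close>

fun picard_iter :: "('a::euclidean_space \<Rightarrow> 'a) \<Rightarrow> 'a \<Rightarrow> nat \<Rightarrow> real \<Rightarrow> 'a" where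
  "picard_iter f x0 0 = (\<lambda>t. x0)"
| "picard_iter f x0 (Suc m) = (\<lambda>t. x0 + integral {0..t} (\<lambda>s. f (picard_iter f x0 m s)))"

lemma integral_power_atLeastAtMost_0:
  assumes "0 \<le> t"
  shows "integral {0..t} (\<lambda>s::real. s ^ k) = t ^ Suc k / Suc k"
proof -
  have "((\<lambda>s::real. s ^ k) has_integral (t ^ Suc k / Suc k - 0 ^ Suc k / Suc k)) {0..t}"
    apply (rule fundamental_theorem_of_calculus[OF assms])
    unfolding has_real_derivative_iff_has_vector_derivative[symmetric]
    apply (auto intro!: derivative_eq_intros)
    subgoal for x
      by (cases k) (auto simp: field_simps)
    done
  then show ?thesis by (simp add: integral_unique)
qed

context
  fixes f :: "'a::euclidean_space \<Rightarrow> 'a" and L :: real and x0 :: 'a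
  assumes lip: "L-lipschitz_on UNIV f"
begin

lemma continuous_on_picard_iter: "continuous_on {0..T} (picard_iter f x0 m)"
proof (induction m)
  case 0
  then show ?case by simp
next
  case (Suc m)
  have "continuous_on {0..T} (\<lambda>s. f (picard_iter f x0 m s))"
    by (rule continuous_on_compose2[OF lipschitz_on_continuous_on[OF lip] Suc]) auto
  then show ?case
    by (auto intro!: continuous_on_add indefinite_integral_continuous_1 integrable_continuous_real)
qed

lemma integrable_picard_iter: "(\<lambda>s. f (picard_iter f x0 m s)) integrable_on {0..t}"
  by (intro integrable_continuous_real continuous_on_compose2[OF lipschitz_on_continuous_on[OF lip]
        continuous_on_picard_iter]) auto

lemma norm_picard_iter_Suc_diff_le:
  assumes "0 \<le> t"
  shows "norm (picard_iter f x0 (Suc m) t - picard_iter f x0 m t)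
           \<le> norm (f x0) * L ^ m * t ^ Suc m / fact (Suc m)"
  using assms
proof (induction m arbitrary: t)
  case 0
  then show ?case by simp
next
  case (Suc m)
  let ?B = "norm (f x0)"
  have L0: "0 \<le> L" by (rule lipschitz_on_nonneg[OF lip])
  have "picard_iter f x0 (Suc (Suc m)) t - picard_iter f x0 (Suc m) t
      = integral {0..t} (\<lambda>s. f (picard_iter f x0 (Suc m) s) - f (picard_iter f x0 m s))"
    unfolding integral_diff[OF integrable_picard_iter integrable_picard_iter]
    by (subst (1 2) picard_iter.simps(2)) simp
  also have "norm \<dots> \<le> integral {0..t} (\<lambda>s. (L * (?B * L^m / fact (Suc m))) * s ^ Suc m)"
  proof (rule integral_norm_bound_integral)
    show "(\<lambda>s. f (picard_iter f x0 (Suc m) s) - f (picard_iter f x0 m s)) integrable_on {0..t}"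
      by (rule integrable_diff[OF integrable_picard_iter integrable_picard_iter])
    show "(\<lambda>s. L * (?B * L ^ m / fact (Suc m)) * s ^ Suc m) integrable_on {0..t}"
      by (intro integrable_continuous_real continuous_intros)
    fix s assume s: "s \<in> {0..t}"
    have "norm (f (picard_iter f x0 (Suc m) s) - f (picard_iter f x0 m s))
        \<le> L * norm (picard_iter f x0 (Suc m) s - picard_iter f x0 m s)"
      by (rule lipschitz_on_normD[OF lip]) auto
    also have "\<dots> \<le> L * (?B * L^m * s^Suc m / fact (Suc m))"
      by (rule mult_left_mono[OF Suc.IH L0]) (use s in simp)
    finally show "norm (f (picard_iter f x0 (Suc m) s) - f (picard_iter f x0 m s))
        \<le> L * (?B * L ^ m / fact (Suc m)) * s ^ Suc m"
      by (simp add: field_simps)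
  qed
  also have "\<dots> = (L * (?B * L^m / fact (Suc m))) * (t ^ Suc (Suc m) / Suc (Suc m))"
    using integral_power_atLeastAtMost_0[OF Suc.prems, of "Suc m"] by simp
  also have "\<dots> = ?B * L ^ Suc m * t ^ Suc (Suc m) / fact (Suc (Suc m))"
    by (simp add: field_simps fact_Suc[of "Suc m"])
  finally show ?case .
qed

definition picard_limit :: "real \<Rightarrow> 'a" where
  "picard_limit t = x0 + (\<Sum>j. picard_iter f x0 (Suc j) t - picard_iter f x0 j t)"

lemma uniform_limit_picard_iter:
  "uniform_limit {0..T} (picard_iter f x0) picard_limit sequentially"
proof -
  let ?B = "norm (f x0)"
  have L0: "0 \<le> L" by (rule lipschitz_on_nonneg[OF lip])
  define M where "M j = ?B * T * (inverse (fact j) * (L*T)^j)" for j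
  have "summable M"
    unfolding M_def by (intro summable_mult summable_exp)
  moreover have "norm (picard_iter f x0 (Suc j) t - picard_iter f x0 j t) \<le> M j"
    if t: "t \<in> {0..T}" for j t
  proof -
    have "norm (picard_iter f x0 (Suc j) t - picard_iter f x0 j t)
        \<le> ?B * L^j * t^Suc j / fact (Suc j)"
      using norm_picard_iter_Suc_diff_le t by auto
    also have "\<dots> \<le> ?B * L^j * T^Suc j / fact j"
    proof (rule frac_le)
      show "?B * L^j * t^Suc j \<le> ?B * L^j * T^Suc j"
        using t L0 by (intro mult_left_mono power_mono) auto
    qed (use t L0 in \<open>auto simp: fact_mono\<close>)
    also have "\<dots> = M j" unfolding M_def by (simp add: field_simps power_mult_distrib)
    finally show ?thesis .
  qed
  ultimately have "uniform_limit {0..T}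
      (\<lambda>n t. \<Sum>i<n. picard_iter f x0 (Suc i) t - picard_iter f x0 i t)
      (\<lambda>t. \<Sum>i. picard_iter f x0 (Suc i) t - picard_iter f x0 i t) sequentially"
    by (intro Weierstrass_m_test) auto
  then have "uniform_limit {0..T}
      (\<lambda>n t. x0 + (\<Sum>i<n. picard_iter f x0 (Suc i) t - picard_iter f x0 i t)) picard_limit sequentially"
    unfolding picard_limit_def by (intro uniform_limit_add uniform_limit_const)
  moreover have "(\<lambda>n t. x0 + (\<Sum>i<n. picard_iter f x0 (Suc i) t - picard_iter f x0 i t)) = picard_iter f x0"
    by (intro ext, subst sum_lessThan_telescope) simp
  ultimately show ?thesis by simp
qed

lemma continuous_on_picard_limit: "continuous_on {0..T} picard_limit"
  by (rule uniform_limit_theorem[OF _ uniform_limit_picard_iter])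
    (auto intro: always_eventually continuous_on_picard_iter)

lemma uniform_limit_field_picard_iter:
  "uniform_limit {0..T} (\<lambda>n s. f (picard_iter f x0 n s)) (\<lambda>s. f (picard_limit s)) sequentially"
proof (rule uniform_limitI)
  fix e :: real assume e: "e > 0"
  have L0: "0 \<le> L" by (rule lipschitz_on_nonneg[OF lip])
  have "\<forall>\<^sub>F n in sequentially. \<forall>x\<in>{0..T}. dist (picard_iter f x0 n x) (picard_limit x) < e / (L + 1)"
    using uniform_limitD[OF uniform_limit_picard_iter] e L0 by simp
  then show "\<forall>\<^sub>F n in sequentially. \<forall>x\<in>{0..T}. dist (f (picard_iter f x0 n x)) (f (picard_limit x)) < e"
  proof (rule eventually_mono, intro ballI)
    fix n x
    assume h: "\<forall>x\<in>{0..T}. dist (picard_iter f x0 n x) (picard_limit x) < e / (L + 1)"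
      and x: "x \<in> {0..T}"
    have "dist (f (picard_iter f x0 n x)) (f (picard_limit x)) \<le> L * dist (picard_iter f x0 n x) (picard_limit x)"
      by (rule lipschitz_onD[OF lip]) auto
    also have "\<dots> \<le> L * (e / (L+1))"
      using h x L0 by (intro mult_left_mono) (auto simp: less_imp_le)
    also have "\<dots> < e" using e L0 by (simp add: field_simps)
    finally show "dist (f (picard_iter f x0 n x)) (f (picard_limit x)) < e" .
  qed
qed

lemma picard_limit_integral_eq:
  assumes t: "0 \<le> t"
  shows "picard_limit t = x0 + integral {0..t} (\<lambda>s. f (picard_limit s))"
proof -
  obtain I J where I: "\<And>n. ((\<lambda>s. f (picard_iter f x0 n s)) has_integral I n) {0..t}"
    and J: "((\<lambda>s. f (picard_limit s)) has_integral J) {0..t}" and IJ: "I \<longlonglongrightarrow> J"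
  proof -
    have "\<And>n. continuous_on {0..t} (\<lambda>s. f (picard_iter f x0 n s))"
      by (rule continuous_on_compose2[OF lipschitz_on_continuous_on[OF lip] continuous_on_picard_iter]) auto
    then show ?thesis
      using uniform_limit_integral[OF uniform_limit_field_picard_iter _ sequentially_bot] that by blast
  qed
  have "\<And>n. integral {0..t} (\<lambda>s. f (picard_iter f x0 n s)) = I n"
    using I by (intro integral_unique)
  then have "(\<lambda>n. picard_iter f x0 (Suc n) t) \<longlonglongrightarrow> x0 + J"
    using tendsto_add[OF tendsto_const IJ, of x0] by simp
  moreover have "(\<lambda>n. picard_iter f x0 (Suc n) t) \<longlonglongrightarrow> picard_limit t"
    using LIMSEQ_Suc[OF tendsto_uniform_limitI[OF uniform_limit_picard_iter[of t], of t]] t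
    by (simp del: picard_iter.simps)
  ultimately have "picard_limit t = x0 + J" by (rule LIMSEQ_unique[rotated])
  then show ?thesis using integral_unique[OF J] by simp
qed

lemma picard_limit_has_vector_derivative:
  assumes t: "0 \<le> t"
  shows "(picard_limit has_vector_derivative f (picard_limit t)) (at t within {0..})"
proof -
  have "continuous_on {0..t+1} (\<lambda>s. f (picard_limit s))"
    by (rule continuous_on_compose2[OF lipschitz_on_continuous_on[OF lip] continuous_on_picard_limit]) auto
  then have "((\<lambda>u. x0 + integral {0..u} (\<lambda>s. f (picard_limit s))) has_vector_derivative f (picard_limit t))
      (at t within {0..t+1})"
    using integral_has_vector_derivative[of 0 "t+1" _ t] t by (auto intro!: derivative_eq_intros)
  then have "(picard_limit has_vector_derivative f (picard_limit t)) (at t within {0..t+1})"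
    by (rule has_vector_derivative_transform[rotated 2]) (use t picard_limit_integral_eq in auto)
  moreover have "at t within {0..t+1} = at t within {0..}"
    by (rule at_within_nhd[where S="{..<t+1}"]) (use t in auto)
  ultimately show ?thesis by simp
qed

end

lemma lipschitz_autonomous_solution_exists:
  fixes f :: "'a::euclidean_space \<Rightarrow> 'a"
  assumes "L-lipschitz_on UNIV f"
  obtains x where "x 0 = a" "\<And>t. 0 \<le> t \<Longrightarrow> (x has_vector_derivative f (x t)) (at t within {0..})"
  using that[of "picard_limit f a"] picard_limit_integral_eq[OF assms, of 0]
    picard_limit_has_vector_derivative[OF assms] by simp

lemma has_vector_derivative_within_Un:
  "(f has_vector_derivative f') (at x within s) \<Longrightarrow> (f has_vector_derivative f') (at x within t)
   \<Longrightarrow> (f has_vector_derivative f') (at x within s \<union> t)"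
  unfolding has_vector_derivative_def has_derivative_within using Lim_within_Un by blast

lemma solution_append:
  fixes x1 y :: "real \<Rightarrow> 'a::real_normed_vector"
  assumes T: "0 \<le> T"
    and x1: "\<And>t. t \<in> {0..T} \<Longrightarrow> (x1 has_vector_derivative F (x1 t)) (at t within {0..T})"
    and y0: "y 0 = x1 T"
    and y: "\<And>s. 0 \<le> s \<Longrightarrow> (y has_vector_derivative F (y s)) (at s within {0..})"
    and t: "0 \<le> t"
  shows "((\<lambda>t. if t \<le> T then x1 t else y (t - T)) has_vector_derivative
           F (if t \<le> T then x1 t else y (t - T))) (at t within {0..})"
    (is "(?x has_vector_derivative F (?x t)) _")
proof -
  have left: "(?x has_vector_derivative F (?x t)) (at t within {0..T})" if "t \<le> T"
  proof -
    have "(x1 has_vector_derivative F (x1 t)) (at t within {0..T})" using x1 t that by auto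
    then have "(?x has_vector_derivative F (x1 t)) (at t within {0..T})"
      by (rule has_vector_derivative_transform[rotated 2]) (use t that in auto)
    then show ?thesis using that by simp
  qed
  have right: "(?x has_vector_derivative F (?x t)) (at t within {T..})" if "T \<le> t"
  proof -
    have shift: "?x s = y (s - T)" if "T \<le> s" for s using that y0 by auto
    have "(\<lambda>s. s - T) ` {T..} = {0..}"
      by (auto simp: image_iff intro!: bexI[where x="_ + T"])
    then have "(y has_vector_derivative F (y (t - T))) (at (t - T) within (\<lambda>s. s - T) ` {T..})"
      using y[of "t - T"] that by simp
    then have "((y \<circ> (\<lambda>s. s - T)) has_vector_derivative 1 *\<^sub>R F (y (t - T))) (at t within {T..})"
      by (intro vector_diff_chain_within) (auto intro!: derivative_eq_intros)
    then have "((\<lambda>s. y (s - T)) has_vector_derivative F (y (t - T))) (at t within {T..})"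
      by (simp add: o_def)
    then have "(?x has_vector_derivative F (y (t - T))) (at t within {T..})"
      by (rule has_vector_derivative_transform[rotated 2]) (use that shift in auto)
    then show ?thesis using shift[OF that] by simp
  qed
  consider "t < T" | "t = T" | "T < t" by linarith
  then show ?thesis
  proof cases
    case 1
    have "at t within {0..T} = at t within {0..}"
      by (rule at_within_nhd[where S="{..<T}"]) (use 1 t in auto)
    then show ?thesis using left 1 by simp
  next
    case 2
    have "{0..} = {0..T} \<union> {T..}" using T by auto
    then show ?thesis using has_vector_derivative_within_Un[OF left right] 2 by simp
  next
    case 3
    have "at t within {T..} = at t within {0..}"
      by (rule at_within_nhd[where S="{T<..}"]) (use 3 t T in auto)
    then show ?thesis using right 3 by simp
  qed
qed

section \<open>Weighted quadratic Lyapunov functions\<close>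

definition weighted_inner :: "('n::finite \<Rightarrow> real) \<Rightarrow> real^'n \<Rightarrow> real^'n \<Rightarrow> real" where
  "weighted_inner w u v = (\<Sum>i\<in>UNIV. w i * u$i * v$i)"

lemma weighted_inner_self: "weighted_inner w u u = (\<Sum>i\<in>UNIV. w i * (u$i)^2)"
  unfolding weighted_inner_def by (simp add: power2_eq_square mult.assoc)

lemma weighted_inner_self_bounds:
  assumes "\<And>i. 1 \<le> w i" "\<And>i. w i \<le> K"
  shows "(norm u)^2 \<le> weighted_inner w u u" "weighted_inner w u u \<le> K * (norm u)^2"
proof -
  have norm2: "(norm u)^2 = (\<Sum>i\<in>UNIV. (u$i)^2)"
    unfolding norm_vec_def L2_set_def by (simp add: sum_nonneg)
  show "(norm u)^2 \<le> weighted_inner w u u"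
    unfolding norm2 weighted_inner_self using assms by (intro sum_mono) (simp add: mult_le_cancel_right1)
  show "weighted_inner w u u \<le> K * (norm u)^2"
    unfolding norm2 weighted_inner_self sum_distrib_left
    using assms by (intro sum_mono mult_right_mono) auto
qed

lemma continuous_on_weighted_inner [continuous_intros]:
  fixes u v :: "'a::topological_space \<Rightarrow> real^'n::finite"
  assumes "continuous_on S u" "continuous_on S v"
  shows "continuous_on S (\<lambda>t. weighted_inner w (u t) (v t))"
  unfolding weighted_inner_def by (intro continuous_intros assms)

lemma has_real_derivative_weighted_inner_self:
  fixes x :: "real \<Rightarrow> real^'n::finite"
  assumes "(x has_vector_derivative x') (at t within S)"
  shows "((\<lambda>t. weighted_inner w (x t - c) (x t - c)) has_real_derivative
           2 * weighted_inner w (x t - c) x') (at t within S)"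
proof -
  have d: "((\<lambda>t. x t $ i) has_real_derivative x' $ i) (at t within S)" for i
    using bounded_linear.has_vector_derivative[OF bounded_linear_vec_nth assms, of i]
    by (simp add: has_real_derivative_iff_has_vector_derivative)
  have "((\<lambda>t. \<Sum>i\<in>UNIV. w i * (x t $ i - c $ i)^2) has_real_derivative
           (\<Sum>i\<in>UNIV. 2 * (w i * (x t $ i - c $ i) * x' $ i))) (at t within S)"
    by (intro DERIV_sum) (rule derivative_eq_intros d refl | simp)+
  then show ?thesis
    unfolding weighted_inner_self unfolding weighted_inner_def
    by (simp add: sum_distrib_left mult.assoc)
qed

lemma continuous_on_solution:
  assumes "\<And>t. 0 \<le> t \<Longrightarrow> (x has_vector_derivative F (x t)) (at t within {0..})"
  shows "continuous_on {0..} x"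
  unfolding continuous_on_eq_continuous_within using has_vector_derivative_continuous[OF assms] by simp

context
  fixes x :: "real \<Rightarrow> real^'n::finite" and F :: "real^'n \<Rightarrow> real^'n"
    and c :: "real^'n" and w :: "'n \<Rightarrow> real" and K g r :: real
  assumes sol: "\<And>t. 0 \<le> t \<Longrightarrow> (x has_vector_derivative F (x t)) (at t within {0..})"
    and weight: "\<And>i. 1 \<le> w i" "\<And>i. w i \<le> K"
    and decrease: "\<And>z. dist z c < r \<Longrightarrow>
                   weighted_inner w (z - c) (F z) \<le> - g * weighted_inner w (z - c) (z - c)"
begin

lemma lyapunov_exp_bound:
  assumes T: "0 \<le> T" and near: "\<And>s. 0 < s \<Longrightarrow> s < T \<Longrightarrow> dist (x s) c < r"
  shows "weighted_inner w (x T - c) (x T - c) * exp (2 * g * T) \<le> weighted_inner w (x 0 - c) (x 0 - c)"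
proof -
  define V where "V t = weighted_inner w (x t - c) (x t - c)" for t
  define h where "h t = V t * exp (2 * g * t)" for t
  have "h T \<le> h 0"
  proof (rule DERIV_nonpos_imp_decreasing_open[OF T])
    have "continuous_on {0..T} x" by (rule continuous_on_subset[OF continuous_on_solution[OF sol]]) auto
    then show "continuous_on {0..T} h"
      unfolding h_def V_def by (intro continuous_intros)
    fix s assume s: "0 < s" "s < T"
    have "at s within {0..} = at s"
      by (rule at_within_nhd[where S="{0<..}"]) (use s in auto)
    moreover have "(V has_real_derivative 2 * weighted_inner w (x s - c) (F (x s))) (at s within {0..})"
      unfolding V_def by (rule has_real_derivative_weighted_inner_self[OF sol]) (use s in simp)
    ultimately have dV: "(V has_real_derivative 2 * weighted_inner w (x s - c) (F (x s))) (at s)"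
      by (simp only:)
    have dE: "((\<lambda>t. exp (2 * g * t)) has_real_derivative exp (2 * g * s) * (2 * g)) (at s)"
      by (rule DERIV_fun_exp[OF DERIV_cmult_Id])
    have "2 * weighted_inner w (x s - c) (F (x s)) * exp (2 * g * s) + exp (2 * g * s) * (2 * g) * V s
        = 2 * (weighted_inner w (x s - c) (F (x s)) + g * V s) * exp (2 * g * s)"
      by algebra
    then have "(h has_real_derivative 2 * (weighted_inner w (x s - c) (F (x s)) + g * V s) * exp (2 * g * s)) (at s)"
      using DERIV_mult[OF dV dE] unfolding h_def by simp
    moreover have "weighted_inner w (x s - c) (F (x s)) + g * V s \<le> 0"
      using decrease[OF near[OF s]] unfolding V_def by simp
    then have "2 * (weighted_inner w (x s - c) (F (x s)) + g * V s) * exp (2 * g * s) \<le> 0"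
      by (simp add: mult_nonpos_nonneg)
    ultimately show "\<exists>y. (h has_real_derivative y) (at s) \<and> y \<le> 0" by blast
  qed
  then show ?thesis unfolding h_def V_def by simp
qed

lemma solution_stays_in_ball:
  assumes g: "0 \<le> g" and \<rho>: "0 < \<rho>" "\<rho> \<le> r" and start: "K * (dist (x 0) c)^2 < \<rho>^2" and t: "0 \<le> t"
  shows "dist (x t) c < \<rho>"
proof (rule ccontr)
  define V where "V t = weighted_inner w (x t - c) (x t - c)" for t
  have V: "(dist (x t) c)^2 \<le> V t" "V t \<le> K * (dist (x t) c)^2" for t
    using weighted_inner_self_bounds[OF weight, where u = "x t - c"] unfolding V_def dist_norm by auto
  assume "\<not> dist (x t) c < \<rho>"
  define S where "S = {0..} \<inter> (\<lambda>t. dist (x t) c) -` {\<rho>..}"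
  have "closed S" unfolding S_def
    by (intro continuous_closed_preimage continuous_on_dist continuous_on_const continuous_on_solution[OF sol])
      simp_all
  moreover have "S \<noteq> {}" "bdd_below S"
    using t \<open>\<not> dist (x t) c < \<rho>\<close> unfolding S_def by (auto intro: bdd_belowI[of _ 0])
  ultimately have "Inf S \<in> S" by (intro closed_contains_Inf)
  then have T: "0 \<le> Inf S" "\<rho> \<le> dist (x (Inf S)) c" unfolding S_def by auto
  have "dist (x s) c < r" if "0 < s" "s < Inf S" for s
  proof -
    have "s \<notin> S"
    proof
      assume "s \<in> S"
      then have "Inf S \<le> s" by (rule cInf_lower[OF _ \<open>bdd_below S\<close>])
      then show False using that by simp
    qed
    then show ?thesis using that \<rho> unfolding S_def by auto
  qed
  then have "V (Inf S) * exp (2 * g * Inf S) \<le> V 0"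
    unfolding V_def by (rule lyapunov_exp_bound[OF T(1)])
  moreover have "V (Inf S) * 1 \<le> V (Inf S) * exp (2 * g * Inf S)"
  proof (rule mult_left_mono)
    show "0 \<le> V (Inf S)" using V(1)[of "Inf S"] by (smt (verit) zero_le_power2)
  qed (use T(1) g in simp)
  moreover have "V 0 < \<rho>^2" using V(2)[of 0] start by simp
  moreover have "\<rho>^2 \<le> V (Inf S)"
    by (rule order_trans[OF power_mono[OF T(2)] V(1)]) (use \<rho> in simp)
  ultimately show False by linarith
qed

lemma solution_tendsto:
  assumes g: "0 < g" and near: "\<And>t. 0 \<le> t \<Longrightarrow> dist (x t) c < r"
  shows "(x \<longlongrightarrow> c) at_top"
proof -
  define V where "V t = weighted_inner w (x t - c) (x t - c)" for t
  have bound: "(dist (x t) c)^2 \<le> V 0 * exp (- (2 * g * t))" if "0 \<le> t" for t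
  proof -
    have "V t * exp (2 * g * t) \<le> V 0"
      unfolding V_def by (rule lyapunov_exp_bound[OF that near]) simp
    then have "V t \<le> V 0 * exp (- (2 * g * t))"
      by (simp add: exp_minus field_simps)
    moreover have "(dist (x t) c)^2 \<le> V t"
      using weighted_inner_self_bounds[OF weight, where u = "x t - c"] unfolding V_def dist_norm by auto
    ultimately show ?thesis by linarith
  qed
  have exp_lim: "((\<lambda>t. V 0 * exp (- (2 * g * t))) \<longlongrightarrow> 0) at_top"
    using g by real_asymp
  have "((\<lambda>t. (dist (x t) c)^2) \<longlongrightarrow> 0) at_top"
  proof (rule tendsto_sandwich[OF _ _ tendsto_const exp_lim])
    show "\<forall>\<^sub>F t in at_top. (dist (x t) c)^2 \<le> V 0 * exp (- (2 * g * t))"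
      using eventually_ge_at_top[of 0] by (rule eventually_mono) (rule bound)
  qed simp
  then have "((\<lambda>t. sqrt ((dist (x t) c)^2)) \<longlongrightarrow> sqrt 0) at_top"
    by (rule tendsto_real_sqrt)
  then have "((\<lambda>t. dist (x t) c) \<longlongrightarrow> 0) at_top" by simp
  then show ?thesis by (subst tendsto_dist_iff)
qed

end

lemma tln_asymp_stable_fp_if_lyapunov:
  fixes J D :: "real^'n::finite^'n"
  assumes fp: "tln_fixed_point J D b xs"
    and weight: "\<And>i. 1 \<le> w i" "\<And>i. w i \<le> K"
    and decrease: "\<And>z. dist z xs < r \<Longrightarrow> weighted_inner w (z - xs) (tln_field J D b z)
                   \<le> - g * weighted_inner w (z - xs) (z - xs)"
    and rate: "0 < g" and r: "0 < r"
  shows "tln_asymp_stable_fp J D b xs"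
proof -
  have K: "1 \<le> K" using weight order_trans by blast
  have stays: "dist (x t) xs < \<rho>"
    if "0 < \<rho>" "\<rho> \<le> r" "dist x0 xs < \<rho> / K" "tln_solution J D b x0 x" "0 \<le> t"
    for \<rho> x0 t and x :: "real \<Rightarrow> real^'n"
  proof (rule solution_stays_in_ball[OF _ weight decrease _ that(1,2) _ that(5)])
    have "K * dist x0 xs < \<rho>" using that(1,3) K by (simp add: field_simps)
    moreover have "dist x0 xs \<le> K * dist x0 xs" using K by (simp add: mult_le_cancel_right1)
    ultimately have "K * dist x0 xs * dist x0 xs < \<rho> * \<rho>" by (intro mult_strict_mono) (use that(1) in auto)
    then show "K * (dist (x 0) xs)^2 < \<rho>^2"
      using that(4) by (simp add: tln_solution_def power2_eq_square mult.assoc)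
  next
    show "\<And>t. 0 \<le> t \<Longrightarrow> (x has_vector_derivative tln_field J D b (x t)) (at t within {0..})"
      using that(4) by (simp add: tln_solution_def)
  next
    show "0 \<le> g" using rate by simp
  qed
  have "tln_stable_fp J D b xs"
    unfolding tln_stable_fp_def
  proof (intro conjI fp allI impI)
    fix e :: real assume e: "0 < e"
    show "\<exists>d>0. \<forall>x0 x. nonneg_vec x0 \<and> dist x0 xs < d \<and> tln_solution J D b x0 x
        \<longrightarrow> (\<forall>t\<ge>0. dist (x t) xs < e)"
    proof (intro exI[of _ "min e r / K"] conjI allI impI)
      fix x0 x and t :: real
      assume "nonneg_vec x0 \<and> dist x0 xs < min e r / K \<and> tln_solution J D b x0 x" "0 \<le> t"
      then have "dist (x t) xs < min e r" using stays[of "min e r" x0 x t] e r by auto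
      then show "dist (x t) xs < e" by simp
    qed (use e r K in simp)
  qed
  moreover have "(x \<longlongrightarrow> xs) at_top"
    if "dist x0 xs < r / K" "tln_solution J D b x0 x" for x0 x
  proof (rule solution_tendsto[OF _ weight decrease rate])
    show "\<And>t. 0 \<le> t \<Longrightarrow> (x has_vector_derivative tln_field J D b (x t)) (at t within {0..})"
      using that(2) by (simp add: tln_solution_def)
    fix t :: real assume "0 \<le> t"
    then show "dist (x t) xs < r" using stays[of r x0 x t] that r by simp
  qed
  ultimately show ?thesis
    unfolding tln_asymp_stable_fp_def using r K by (intro conjI exI[of _ "r / K"] allI impI) auto
qed

section \<open>Stability of nondegenerate fixed points\<close>

lemma matrix_vector_mult_diagonal:
  fixes D :: "real^'n::finite^'n"
  assumes "\<forall>i j. i \<noteq> j \<longrightarrow> D$i$j = 0"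
  shows "(D *v x)$i = D$i$i * x$i"
proof -
  have "(D *v x)$i = (\<Sum>j\<in>UNIV. D$i$j * x$j)" by (simp add: matrix_vector_mult_def)
  also have "\<dots> = (\<Sum>j\<in>UNIV. if j = i then D$i$i * x$i else 0)"
    using assms by (intro sum.cong) auto
  finally show ?thesis by simp
qed

lemma abs_matrix_vector_mult_component_le:
  fixes J :: "real^'n::finite^'n"
  shows "\<bar>(J *v u)$i\<bar> \<le> (\<Sum>i\<in>UNIV. \<Sum>j\<in>UNIV. \<bar>J$i$j\<bar>) * norm u"
proof -
  have "\<bar>(J *v u)$i\<bar> \<le> (\<Sum>j\<in>UNIV. \<bar>J$i$j * u$j\<bar>)"
    unfolding matrix_vector_mult_def by (simp add: sum_abs)
  also have "\<dots> \<le> (\<Sum>j\<in>UNIV. \<bar>J$i$j\<bar> * norm u)"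
    by (intro sum_mono) (simp add: abs_mult mult_left_mono component_le_norm_cart)
  also have "\<dots> \<le> (\<Sum>i\<in>UNIV. \<Sum>j\<in>UNIV. \<bar>J$i$j\<bar>) * norm u"
    unfolding sum_distrib_right[symmetric]
    by (intro mult_right_mono member_le_sum[of i UNIV "\<lambda>i. \<Sum>j\<in>UNIV. \<bar>J$i$j\<bar>"]) (auto intro: sum_nonneg)
  finally show ?thesis .
qed

text \<open>Near a fixed point none of whose inputs (J x + b)_i vanishes, no threshold is crossed,
  so the field is the affine field of the active pattern.\<close>

lemma tln_field_near_nondegenerate_fixed_point:
  fixes J D :: "real^'n::finite^'n"
  assumes diag: "\<forall>i j. i \<noteq> j \<longrightarrow> D$i$j = 0"
    and active: "\<And>i. i \<in> \<tau> \<Longrightarrow> (J *v xs + b)$i = D$i$i * xs$i \<and> 0 < (J *v xs + b)$i"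
    and inactive: "\<And>i. i \<notin> \<tau> \<Longrightarrow> xs$i = 0 \<and> (J *v xs + b)$i < 0"
  obtains r where "0 < r"
    "\<And>z i. dist z xs < r \<Longrightarrow> i \<in> \<tau> \<Longrightarrow> tln_field J D b z $ i = (J *v (z - xs))$i - D$i$i * (z - xs)$i"
    "\<And>z i. dist z xs < r \<Longrightarrow> i \<notin> \<tau> \<Longrightarrow> tln_field J D b z $ i = - D$i$i * (z - xs)$i"
proof
  define m where "m = Min (range (\<lambda>i. \<bar>(J *v xs + b)$i\<bar>))"
  have m: "0 < m" "\<And>i. m \<le> \<bar>(J *v xs + b)$i\<bar>"
  proof -
    have "(J *v xs + b)$i \<noteq> 0" for i using active[of i] inactive[of i] by (cases "i \<in> \<tau>") auto
    then show "0 < m" unfolding m_def by (auto simp: Min_gr_iff)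
    show "m \<le> \<bar>(J *v xs + b)$i\<bar>" for i unfolding m_def by (intro Min_le) auto
  qed
  define Jn where "Jn = (\<Sum>i\<in>UNIV. \<Sum>j\<in>UNIV. \<bar>J$i$j\<bar>)"
  have Jn: "0 \<le> Jn" unfolding Jn_def by (auto intro: sum_nonneg)
  show "0 < m / (Jn + 1)" using m Jn by simp
  have small: "\<bar>(J *v (z - xs))$i\<bar> < m" if "dist z xs < m / (Jn + 1)" for z i
  proof -
    have "\<bar>(J *v (z - xs))$i\<bar> \<le> Jn * dist z xs"
      unfolding Jn_def dist_norm by (rule abs_matrix_vector_mult_component_le)
    also have "\<dots> \<le> Jn * (m / (Jn + 1))" using that Jn by (intro mult_left_mono) auto
    also have "\<dots> < m" using m Jn by (simp add: field_simps)
    finally show ?thesis .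
  qed
  have input: "(J *v z + b)$i = (J *v (z - xs))$i + (J *v xs + b)$i" for z i
    by (simp add: matrix_vector_mult_diff_distrib)
  have field: "tln_field J D b z $ i = - (D$i$i * z$i) + max ((J *v z + b)$i) 0" for z i
    unfolding tln_field_def relu_vec_def by (simp add: matrix_vector_mult_diagonal[OF diag])
  fix z i assume z: "dist z xs < m / (Jn + 1)"
  have "- m < (J *v (z - xs))$i" "(J *v (z - xs))$i < m"
    using small[OF z, of i] by (simp_all add: abs_less_iff)
  show "tln_field J D b z $ i = (J *v (z - xs))$i - D$i$i * (z - xs)$i" if "i \<in> \<tau>"
  proof -
    have "m \<le> (J *v xs + b)$i" using active[OF that] m(2)[of i] by simp
    then have "max ((J *v z + b)$i) 0 = (J *v (z - xs))$i + D$i$i * xs$i"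
      unfolding input[of z i] using active[OF that] \<open>- m < (J *v (z - xs))$i\<close> by simp
    then show ?thesis unfolding field by (simp add: algebra_simps)
  qed
  show "tln_field J D b z $ i = - D$i$i * (z - xs)$i" if "i \<notin> \<tau>"
  proof -
    have "m \<le> - (J *v xs + b)$i" using inactive[OF that] m(2)[of i] by simp
    then have "max ((J *v z + b)$i) 0 = 0"
      unfolding input[of z i] using \<open>(J *v (z - xs))$i < m\<close> by simp
    then show ?thesis unfolding field using inactive[OF that] by simp
  qed
qed

lemma mult_le_weighted_squares: "0 < (a::real) \<Longrightarrow> x * y \<le> a/2 * x^2 + 1/(2*a) * y^2"
proof -
  assume a: "0 < a"
  have "2*a*(x*y) \<le> a^2 * x^2 + y^2"
    using zero_le_power2[of "a*x - y"] by (simp add: power2_diff power_mult_distrib algebra_simps)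
  then have "x*y \<le> (a^2 * x^2 + y^2) / (2*a)" using a by (simp add: field_simps)
  also have "\<dots> = a/2 * x^2 + 1/(2*a) * y^2" using a by (simp add: field_simps power2_eq_square)
  finally show ?thesis .
qed

lemma sum_sum_cross_le:
  fixes y :: "'n::finite \<Rightarrow> real" and a :: "'n \<Rightarrow> 'n \<Rightarrow> real"
  assumes c: "0 < c" and col: "\<And>j. (\<Sum>i\<in>A. (a i j)^2) \<le> Q"
  shows "(\<Sum>i\<in>A. \<Sum>j\<in>B. y i * a i j * y j)
     \<le> c/2 * (\<Sum>i\<in>A. (y i)^2) + real CARD('n) / (2*c) * Q * (\<Sum>j\<in>B. (y j)^2)"
proof -
  define N where "N = real CARD('n)"
  have N: "0 < N" unfolding N_def by simp
  define \<alpha> where "\<alpha> = c / N"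
  have \<alpha>: "0 < \<alpha>" unfolding \<alpha>_def using c N by simp
  have "(\<Sum>i\<in>A. \<Sum>j\<in>B. y i * a i j * y j)
     \<le> (\<Sum>i\<in>A. \<Sum>j\<in>B. \<alpha>/2 * (y i)^2 + 1/(2*\<alpha>) * ((a i j)^2 * (y j)^2))"
  proof (intro sum_mono)
    fix i j
    have "y i * (a i j * y j) \<le> \<alpha>/2 * (y i)^2 + 1/(2*\<alpha>) * (a i j * y j)^2"
      by (rule mult_le_weighted_squares[OF \<alpha>])
    then show "y i * a i j * y j \<le> \<alpha>/2 * (y i)^2 + 1/(2*\<alpha>) * ((a i j)^2 * (y j)^2)"
      by (simp add: power_mult_distrib mult.assoc)
  qed
  also have "\<dots> = \<alpha>/2 * real (card B) * (\<Sum>i\<in>A. (y i)^2)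
      + 1/(2*\<alpha>) * (\<Sum>j\<in>B. (\<Sum>i\<in>A. (a i j)^2) * (y j)^2)"
    by (simp add: sum.distrib sum_distrib_left sum_distrib_right sum.swap[of _ A B] algebra_simps)
  also have "\<dots> \<le> c/2 * (\<Sum>i\<in>A. (y i)^2) + N / (2*c) * Q * (\<Sum>j\<in>B. (y j)^2)"
  proof (rule add_mono)
    have "real (card B) \<le> N" unfolding N_def using card_mono[of UNIV B] by simp
    then have "\<alpha>/2 * real (card B) \<le> c/2" unfolding \<alpha>_def using c N by (simp add: field_simps)
    then show "\<alpha>/2 * real (card B) * (\<Sum>i\<in>A. (y i)^2) \<le> c/2 * (\<Sum>i\<in>A. (y i)^2)"
      by (rule mult_right_mono) (simp add: sum_nonneg)
    have "(\<Sum>j\<in>B. (\<Sum>i\<in>A. (a i j)^2) * (y j)^2) \<le> (\<Sum>j\<in>B. Q * (y j)^2)"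
      using col by (intro sum_mono mult_right_mono) auto
    then have "1/(2*\<alpha>) * (\<Sum>j\<in>B. (\<Sum>i\<in>A. (a i j)^2) * (y j)^2) \<le> 1/(2*\<alpha>) * (\<Sum>j\<in>B. Q * (y j)^2)"
      using \<alpha> by (intro mult_left_mono) auto
    also have "\<dots> = N / (2*c) * Q * (\<Sum>j\<in>B. (y j)^2)"
      unfolding \<alpha>_def using N c by (simp add: sum_distrib_left field_simps)
    finally show "1/(2*\<alpha>) * (\<Sum>j\<in>B. (\<Sum>i\<in>A. (a i j)^2) * (y j)^2) \<le> N / (2*c) * Q * (\<Sum>j\<in>B. (y j)^2)" .
  qed
  finally show ?thesis unfolding N_def .
qed

text \<open>A negative definite active block W coupled through J to an inactive block decaying at rates at
  least dm: weighting the inactive coordinates by K makes their decay absorb the coupling.\<close>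

lemma block_lyapunov_bound:
  fixes y d :: "'n::finite \<Rightarrow> real" and W J :: "'n \<Rightarrow> 'n \<Rightarrow> real"
  assumes c: "0 < c" and neg_def: "(\<Sum>i\<in>\<tau>. \<Sum>j\<in>\<tau>. y i * W i j * y j) \<le> -c * (\<Sum>i\<in>\<tau>. (y i)^2)"
    and dm: "0 < dm" "\<And>i. dm \<le> d i" and Q: "\<And>j. (\<Sum>i\<in>\<tau>. (J i j)^2) \<le> Q" "0 \<le> Q"
    and K: "K = 1 + real CARD('n) * Q / (c * dm)" and g: "g = min (c/2) (dm/2)"
  shows "(\<Sum>i\<in>\<tau>. y i * ((\<Sum>j\<in>\<tau>. W i j * y j) + (\<Sum>j\<in>-\<tau>. J i j * y j)))
           + (\<Sum>i\<in>-\<tau>. K * y i * (- d i * y i))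
        \<le> - g * ((\<Sum>i\<in>\<tau>. (y i)^2) + K * (\<Sum>i\<in>-\<tau>. (y i)^2))"
proof -
  define N where "N = real CARD('n)"
  define S1 where "S1 = (\<Sum>i\<in>\<tau>. (y i)^2)"
  define S2 where "S2 = (\<Sum>i\<in>-\<tau>. (y i)^2)"
  have S1: "0 \<le> S1" and S2: "0 \<le> S2" unfolding S1_def S2_def by (auto intro: sum_nonneg)
  have N: "0 < N" unfolding N_def by simp
  have K1: "1 \<le> K" unfolding K using N c dm Q by simp
  have split: "(\<Sum>i\<in>\<tau>. y i * ((\<Sum>j\<in>\<tau>. W i j * y j) + (\<Sum>j\<in>-\<tau>. J i j * y j)))
      = (\<Sum>i\<in>\<tau>. \<Sum>j\<in>\<tau>. y i * W i j * y j) + (\<Sum>i\<in>\<tau>. \<Sum>j\<in>-\<tau>. y i * J i j * y j)"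
    by (simp add: distrib_left sum.distrib sum_distrib_left mult.assoc)
  have cross: "(\<Sum>i\<in>\<tau>. \<Sum>j\<in>-\<tau>. y i * J i j * y j) \<le> c/2 * S1 + N / (2*c) * Q * S2"
    unfolding S1_def S2_def N_def by (rule sum_sum_cross_le[OF c Q(1)])
  have "(\<Sum>i\<in>-\<tau>. K * y i * (- d i * y i)) = - (\<Sum>i\<in>-\<tau>. K * d i * (y i)^2)"
    by (simp add: sum_negf[symmetric] power2_eq_square algebra_simps)
  also have "\<dots> \<le> - (\<Sum>i\<in>-\<tau>. K * dm * (y i)^2)"
    using dm K1 by (simp add: sum_mono mult_right_mono mult_left_mono)
  also have "\<dots> = - (K * dm) * S2" unfolding S2_def by (simp add: sum_distrib_left sum_negf)
  finally have inactive: "(\<Sum>i\<in>-\<tau>. K * y i * (- d i * y i)) \<le> - (K * dm) * S2" .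
  have Kdm: "K * dm = dm + N * Q / c" unfolding K N_def using c dm by (simp add: field_simps)
  have "(\<Sum>i\<in>\<tau>. y i * ((\<Sum>j\<in>\<tau>. W i j * y j) + (\<Sum>j\<in>-\<tau>. J i j * y j)))
        + (\<Sum>i\<in>-\<tau>. K * y i * (- d i * y i))
      \<le> -c * S1 + (c/2 * S1 + N / (2*c) * Q * S2) + (- (K * dm) * S2)"
    unfolding split using neg_def cross inactive unfolding S1_def by linarith
  also have "\<dots> = - (c/2) * S1 - (dm + N * Q / (2*c)) * S2"
    unfolding Kdm by (simp add: field_simps)
  also have "\<dots> \<le> - g * S1 - g * K * S2"
  proof -
    have "g * S1 \<le> (c/2) * S1" unfolding g using S1 by (intro mult_right_mono) auto
    moreover have "g * K * S2 \<le> (dm + N * Q / (2*c)) * S2"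
    proof (rule mult_right_mono[OF _ S2])
      have "g * K \<le> dm/2 * K" unfolding g using K1 by (intro mult_right_mono) auto
      also have "\<dots> = dm/2 + N * Q / (2*c)" unfolding K N_def using c dm by (simp add: field_simps)
      finally show "g * K \<le> dm + N * Q / (2*c)" using dm by simp
    qed
    ultimately show ?thesis by linarith
  qed
  finally show ?thesis unfolding S1_def S2_def by (simp add: algebra_simps)
qed

lemma sum_UNIV_split: "sum f (UNIV::'n::finite set) = sum f \<tau> + sum f (-\<tau>)"
  using sum.Int_Diff[of UNIV f \<tau>] by (simp add: Compl_eq_Diff_UNIV)

lemma matrix_vector_mult_minus_diagonal_split:
  fixes J D :: "real^'n::finite^'n"
  assumes diag: "\<forall>i j. i \<noteq> j \<longrightarrow> D$i$j = 0" and i: "i \<in> \<tau>"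
  shows "(J *v u)$i - D$i$i * u$i = (\<Sum>j\<in>\<tau>. (J$i$j - D$i$j) * u$j) + (\<Sum>j\<in>-\<tau>. J$i$j * u$j)"
proof -
  have "(\<Sum>j\<in>\<tau>. D$i$j * u$j) = (\<Sum>j\<in>\<tau>. if j = i then D$i$i * u$i else 0)"
    using diag by (intro sum.cong) auto
  then have "(\<Sum>j\<in>\<tau>. D$i$j * u$j) = D$i$i * u$i" using i by simp
  then show ?thesis
    using sum_UNIV_split[of "\<lambda>j. J$i$j * u$j" \<tau>]
    by (simp add: matrix_vector_mult_def left_diff_distrib sum_subtractf)
qed

text \<open>Strong inhibition of the neurons outside \<tau> makes the indicator of \<tau> a nondegenerate fixed
  point.\<close>

lemma exists_nondegenerate_fixed_point:
  fixes J D :: "real^'n::finite^'n"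
  assumes diag: "\<forall>i j. i \<noteq> j \<longrightarrow> D$i$j = 0" and pos: "\<forall>i. 0 < D$i$i"
  obtains b xs r where "tln_fixed_point J D b xs" "supp_vec xs = \<tau>" "0 < r"
    "\<And>z i. dist z xs < r \<Longrightarrow> i \<in> \<tau> \<Longrightarrow> tln_field J D b z $ i = (J *v (z - xs))$i - D$i$i * (z - xs)$i"
    "\<And>z i. dist z xs < r \<Longrightarrow> i \<notin> \<tau> \<Longrightarrow> tln_field J D b z $ i = - D$i$i * (z - xs)$i"
proof -
  define xs :: "real^'n" where "xs = (\<chi> i. if i \<in> \<tau> then 1 else 0)"
  define b :: "real^'n" where "b = (\<chi> i. if i \<in> \<tau> then D$i$i - (J *v xs)$i else - \<bar>(J *v xs)$i\<bar> - 1)"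
  have active_input: "(J *v xs + b)$i = D$i$i * xs$i \<and> 0 < (J *v xs + b)$i" if "i \<in> \<tau>" for i
    using that pos by (simp add: xs_def b_def)
  have inactive_input: "xs$i = 0 \<and> (J *v xs + b)$i < 0" if "i \<notin> \<tau>" for i
    using that by (simp add: xs_def b_def)
  obtain r where r: "0 < r"
    and active: "\<And>z i. dist z xs < r \<Longrightarrow> i \<in> \<tau> \<Longrightarrow>
      tln_field J D b z $ i = (J *v (z - xs))$i - D$i$i * (z - xs)$i"
    and inactive: "\<And>z i. dist z xs < r \<Longrightarrow> i \<notin> \<tau> \<Longrightarrow> tln_field J D b z $ i = - D$i$i * (z - xs)$i"
    using tln_field_near_nondegenerate_fixed_point[OF diag active_input inactive_input] by blast
  have "tln_fixed_point J D b xs"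
    unfolding tln_fixed_point_def nonneg_vec_def vec_eq_iff
    using active[of xs] inactive[of xs] r by (auto simp: xs_def)
  moreover have "supp_vec xs = \<tau>" unfolding supp_vec_def xs_def by auto
  ultimately show ?thesis using that r active inactive by blast
qed

lemma stable_set_if_negative_definite:
  fixes J D :: "real^'n::finite^'n"
  assumes diag: "\<forall>i j. i \<noteq> j \<longrightarrow> D$i$j = 0" and pos: "\<forall>i. 0 < D$i$i" and ne: "\<tau> \<noteq> {}"
    and c: "0 < c"
    and neg_def: "\<And>y. (\<Sum>i\<in>\<tau>. \<Sum>j\<in>\<tau>. y i * (J$i$j - D$i$j) * y j) \<le> -c * (\<Sum>i\<in>\<tau>. (y i)^2)"
  shows "stable_set J D \<tau>"
proof -
  obtain b xs r where fp: "tln_fixed_point J D b xs" and supp: "supp_vec xs = \<tau>" and r: "0 < r"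
    and active: "\<And>z i. dist z xs < r \<Longrightarrow> i \<in> \<tau> \<Longrightarrow>
      tln_field J D b z $ i = (J *v (z - xs))$i - D$i$i * (z - xs)$i"
    and inactive: "\<And>z i. dist z xs < r \<Longrightarrow> i \<notin> \<tau> \<Longrightarrow> tln_field J D b z $ i = - D$i$i * (z - xs)$i"
    using exists_nondegenerate_fixed_point[OF diag pos] by blast
  define dm where "dm = Min (range (\<lambda>i. D$i$i))"
  have dm: "0 < dm" "\<And>i. dm \<le> D$i$i" unfolding dm_def using pos by (auto simp: Min_gr_iff)
  define Q where "Q = (\<Sum>i\<in>UNIV. \<Sum>j\<in>UNIV. (J$i$j)^2)"
  have Q: "(\<Sum>i\<in>\<tau>. (J$i$j)^2) \<le> Q" "0 \<le> Q" for j
  proof -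
    have "(\<Sum>i\<in>\<tau>. (J$i$j)^2) \<le> (\<Sum>i\<in>UNIV. (J$i$j)^2)" by (rule sum_mono2) auto
    also have "\<dots> \<le> Q" unfolding Q_def by (intro sum_mono member_le_sum) auto
    finally show "(\<Sum>i\<in>\<tau>. (J$i$j)^2) \<le> Q" .
    show "0 \<le> Q" unfolding Q_def by (intro sum_nonneg) simp
  qed
  define K where "K = 1 + real CARD('n) * Q / (c * dm)"
  define g where "g = min (c/2) (dm/2)"
  define w where "w i = (if i \<in> \<tau> then 1 else K)" for i
  have weight: "1 \<le> w i" "w i \<le> K" for i unfolding w_def K_def using c dm Q by auto
  have decrease: "weighted_inner w (z - xs) (tln_field J D b z) \<le> - g * weighted_inner w (z - xs) (z - xs)"
    if z: "dist z xs < r" for z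
  proof -
    define y where "y i = z$i - xs$i" for i
    note row = matrix_vector_mult_minus_diagonal_split[OF diag, where \<tau>=\<tau> and u="z - xs", simplified]
    have "weighted_inner w (z - xs) (tln_field J D b z)
      = (\<Sum>i\<in>\<tau>. y i * ((\<Sum>j\<in>\<tau>. (J$i$j - D$i$j) * y j) + (\<Sum>j\<in>-\<tau>. J$i$j * y j)))
        + (\<Sum>i\<in>-\<tau>. K * y i * (- D$i$i * y i))"
      unfolding weighted_inner_def sum_UNIV_split[of _ \<tau>]
      by (intro arg_cong2[where f="(+)"] sum.cong)
        (auto simp: w_def y_def active[OF z] inactive[OF z] row)
    also have "\<dots> \<le> - g * ((\<Sum>i\<in>\<tau>. (y i)^2) + K * (\<Sum>i\<in>-\<tau>. (y i)^2))"
      by (rule block_lyapunov_bound[OF c neg_def dm Q K_def g_def])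
    also have "(\<Sum>i\<in>\<tau>. (y i)^2) + K * (\<Sum>i\<in>-\<tau>. (y i)^2) = weighted_inner w (z - xs) (z - xs)"
      unfolding weighted_inner_self sum_UNIV_split[of _ \<tau>] sum_distrib_left
      by (intro arg_cong2[where f="(+)"] sum.cong) (auto simp: w_def y_def)
    finally show ?thesis .
  qed
  have "0 < g" unfolding g_def using c dm(1) by simp
  then have "tln_asymp_stable_fp J D b xs"
    using tln_asymp_stable_fp_if_lyapunov[OF fp weight decrease] r by blast
  then show ?thesis unfolding stable_set_def using ne supp by blast
qed

section \<open>Instability along invariant rays\<close>

lemma tln_fixed_point_inputs:
  fixes J D :: "real^'n::finite^'n"
  assumes diag: "\<forall>i j. i \<noteq> j \<longrightarrow> D$i$j = 0" and pos: "\<forall>i. 0 < D$i$i"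
    and fp: "tln_fixed_point J D b xs" and supp: "supp_vec xs = \<sigma>"
  shows "i \<in> \<sigma> \<Longrightarrow> 0 < xs$i \<and> (J *v xs + b)$i = D$i$i * xs$i"
    and "i \<notin> \<sigma> \<Longrightarrow> xs$i = 0 \<and> (J *v xs + b)$i \<le> 0"
proof -
  have "tln_field J D b xs $ i = 0" using fp unfolding tln_fixed_point_def by simp
  then have zero: "- (D$i$i * xs$i) + max ((J *v xs + b)$i) 0 = 0"
    unfolding tln_field_def relu_vec_def by (simp add: matrix_vector_mult_diagonal[OF diag])
  have nonneg: "0 \<le> xs$i" using fp unfolding tln_fixed_point_def nonneg_vec_def by simp
  show "0 < xs$i \<and> (J *v xs + b)$i = D$i$i * xs$i" if "i \<in> \<sigma>"
  proof -
    have "0 < xs$i" using that supp unfolding supp_vec_def by auto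
    then have "0 < D$i$i * xs$i" using pos by simp
    then show ?thesis using zero \<open>0 < xs$i\<close> by (simp add: max_def split: if_splits)
  qed
  show "xs$i = 0 \<and> (J *v xs + b)$i \<le> 0" if "i \<notin> \<sigma>"
  proof -
    have "xs$i = 0" using that supp nonneg unfolding supp_vec_def by force
    then show ?thesis using zero by (simp add: max_def split: if_splits)
  qed
qed

text \<open>The hypothesis on s says that no threshold is crossed at xs + s v.\<close>

lemma tln_field_on_eigenray:
  fixes J D :: "real^'n::finite^'n"
  assumes diag: "\<forall>i j. i \<noteq> j \<longrightarrow> D$i$j = 0" and pos: "\<forall>i. 0 < D$i$i"
    and fp: "tln_fixed_point J D b xs" and supp: "supp_vec xs = \<sigma>"
    and v_supp: "\<And>i. i \<notin> \<sigma> \<Longrightarrow> v$i = 0"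
    and eigen: "\<And>i. i \<in> \<sigma> \<Longrightarrow> (J *v v)$i - D$i$i * v$i = lam * v$i"
    and silent: "\<And>i. i \<notin> \<sigma> \<Longrightarrow> (J *v v)$i \<le> 0"
    and s: "0 \<le> s" and small: "\<And>i. i \<in> \<sigma> \<Longrightarrow> - (D$i$i * xs$i) < s * (J *v v)$i \<and> - xs$i \<le> s * v$i"
  shows "tln_field J D b (xs + s *\<^sub>R v) = (s * lam) *\<^sub>R v" and "nonneg_vec (xs + s *\<^sub>R v)"
proof -
  note inputs = tln_fixed_point_inputs[OF diag pos fp supp]
  have input: "(J *v (xs + s *\<^sub>R v) + b)$i = (J *v xs + b)$i + s * (J *v v)$i" for i
    by (simp add: matrix_vector_mult_def sum.distrib sum_distrib_left algebra_simps)
  have field: "tln_field J D b z $ i = - (D$i$i * z$i) + max ((J *v z + b)$i) 0" for z i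
    unfolding tln_field_def relu_vec_def by (simp add: matrix_vector_mult_diagonal[OF diag])
  have "tln_field J D b (xs + s *\<^sub>R v) $ i = ((s * lam) *\<^sub>R v) $ i \<and> 0 \<le> (xs + s *\<^sub>R v)$i" for i
  proof (cases "i \<in> \<sigma>")
    case True
    then have "0 < (J *v (xs + s *\<^sub>R v) + b)$i"
      unfolding input using inputs(1)[OF True] small[OF True] by auto
    then show ?thesis unfolding field input using inputs(1)[OF True] eigen[OF True] small[OF True]
      by (simp add: algebra_simps)
  next
    case False
    have "(J *v (xs + s *\<^sub>R v) + b)$i \<le> 0"
      unfolding input using inputs(2)[OF False] silent[OF False] s
      by (simp add: add_nonpos_nonpos mult_nonneg_nonpos)
    then show ?thesis unfolding field using inputs(2)[OF False] v_supp[OF False] by simp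
  qed
  then show "tln_field J D b (xs + s *\<^sub>R v) = (s * lam) *\<^sub>R v" "nonneg_vec (xs + s *\<^sub>R v)"
    unfolding nonneg_vec_def by (simp_all add: vec_eq_iff)
qed

lemma tln_field_along_eigenray:
  fixes J D :: "real^'n::finite^'n"
  assumes diag: "\<forall>i j. i \<noteq> j \<longrightarrow> D$i$j = 0" and pos: "\<forall>i. 0 < D$i$i"
    and fp: "tln_fixed_point J D b xs" and supp: "supp_vec xs = \<sigma>"
    and v_supp: "\<And>i. i \<notin> \<sigma> \<Longrightarrow> v$i = 0"
    and eigen: "\<And>i. i \<in> \<sigma> \<Longrightarrow> (J *v v)$i - D$i$i * v$i = lam * v$i"
    and silent: "\<And>i. i \<notin> \<sigma> \<Longrightarrow> (J *v v)$i \<le> 0"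
  obtains s0 where "0 < s0"
    "\<And>s. 0 \<le> s \<Longrightarrow> s < s0 \<Longrightarrow> tln_field J D b (xs + s *\<^sub>R v) = (s * lam) *\<^sub>R v"
    "\<And>s. 0 \<le> s \<Longrightarrow> s < s0 \<Longrightarrow> nonneg_vec (xs + s *\<^sub>R v)"
proof -
  note inputs = tln_fixed_point_inputs[OF diag pos fp supp]
  define m where "m = Min (insert 1 ((\<lambda>i. min (D$i$i * xs$i) (xs$i)) ` \<sigma>))"
  have m: "0 < m" "\<And>i. i \<in> \<sigma> \<Longrightarrow> m \<le> min (D$i$i * xs$i) (xs$i)"
  proof -
    show "0 < m" unfolding m_def using inputs(1) pos by (auto simp: Min_gr_iff)
    show "m \<le> min (D$i$i * xs$i) (xs$i)" if "i \<in> \<sigma>" for i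
      unfolding m_def using that by (intro Min_le) auto
  qed
  define B where "B = 1 + (\<Sum>i\<in>UNIV. \<bar>(J *v v)$i\<bar>) + (\<Sum>i\<in>UNIV. \<bar>v$i\<bar>)"
  have B: "1 \<le> B" "\<bar>(J *v v)$i\<bar> \<le> B" "\<bar>v$i\<bar> \<le> B" for i
  proof -
    have "\<bar>(J *v v)$i\<bar> \<le> (\<Sum>i\<in>UNIV. \<bar>(J *v v)$i\<bar>)" "\<bar>v$i\<bar> \<le> (\<Sum>i\<in>UNIV. \<bar>v$i\<bar>)"
      by (rule member_le_sum; simp)+
    moreover have "0 \<le> (\<Sum>i\<in>UNIV. \<bar>(J *v v)$i\<bar>)" "0 \<le> (\<Sum>i\<in>UNIV. \<bar>v$i\<bar>)"
      by (simp_all add: sum_nonneg)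
    ultimately show "1 \<le> B" "\<bar>(J *v v)$i\<bar> \<le> B" "\<bar>v$i\<bar> \<le> B"
      unfolding B_def by linarith+
  qed
  have small: "- m < s * a" if "0 \<le> s" "s < m / B" "\<bar>a\<bar> \<le> B" for s a
  proof -
    have "s * (- a) \<le> s * B" using that by (intro mult_left_mono) auto
    also have "\<dots> < m" using that B(1) by (simp add: field_simps)
    finally show ?thesis by simp
  qed
  show ?thesis
  proof
    show "0 < m / B" using m(1) B(1) by simp
    fix s assume s: "0 \<le> s" "s < m / B"
    have "- (D$i$i * xs$i) < s * (J *v v)$i \<and> - xs$i \<le> s * v$i" if "i \<in> \<sigma>" for i
      using small[OF s B(2)[of i]] small[OF s B(3)[of i]] m(2)[OF that] by linarith
    note on_ray = tln_field_on_eigenray[OF diag pos fp supp v_supp eigen silent s(1) this]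
    show "tln_field J D b (xs + s *\<^sub>R v) = (s * lam) *\<^sub>R v" by (rule on_ray(1))
    show "nonneg_vec (xs + s *\<^sub>R v)" by (rule on_ray(2))
  qed
qed

lemma relu_vec_lipschitz: "1-lipschitz_on UNIV (relu_vec :: real^'n::finite \<Rightarrow> _)"
  by (rule lipschitz_onI) (auto simp: dist_norm relu_vec_def intro!: norm_le_componentwise_cart)

lemma tln_field_lipschitz:
  fixes J D :: "real^'n::finite^'n"
  obtains L where "L-lipschitz_on UNIV (tln_field J D b)"
proof -
  obtain B where B: "B-lipschitz_on UNIV (\<lambda>x. D *v x)"
    using bounded_linear.lipschitz_boundE[OF matrix_vector_mul_bounded_linear] by blast
  obtain C where C: "C-lipschitz_on UNIV (\<lambda>x. J *v x)"
    using bounded_linear.lipschitz_boundE[OF matrix_vector_mul_bounded_linear] by blast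
  have "(1 * (C + 0))-lipschitz_on UNIV (\<lambda>x. relu_vec (J *v x + b))"
    by (intro lipschitz_on_compose2 lipschitz_on_add C lipschitz_on_constant
        lipschitz_on_subset[OF relu_vec_lipschitz]) auto
  then have "(B + 1 * (C + 0))-lipschitz_on UNIV (tln_field J D b)"
    unfolding tln_field_def by (intro lipschitz_on_add lipschitz_on_minus B)
  then show ?thesis by (rule that)
qed

text \<open>Along an expanding eigenray the trajectory from xs + \<delta> v is xs + \<delta> e^(lam t) v as long as it
  stays on the ray; however small \<delta> is, it reaches the fixed distance s1 |v| at time ln (s1/\<delta>) / lam.\<close>

lemma not_tln_stable_fp_if_expanding_eigenray:
  fixes J D :: "real^'n::finite^'n"
  assumes diag: "\<forall>i j. i \<noteq> j \<longrightarrow> D$i$j = 0" and pos: "\<forall>i. 0 < D$i$i"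
    and fp: "tln_fixed_point J D b xs" and supp: "supp_vec xs = \<sigma>"
    and v: "v \<noteq> 0" and v_supp: "\<And>i. i \<notin> \<sigma> \<Longrightarrow> v$i = 0"
    and lam: "0 < lam" and eigen: "\<And>i. i \<in> \<sigma> \<Longrightarrow> (J *v v)$i - D$i$i * v$i = lam * v$i"
    and silent: "\<And>i. i \<notin> \<sigma> \<Longrightarrow> (J *v v)$i \<le> 0"
  shows "\<not> tln_stable_fp J D b xs"
proof
  assume stable: "tln_stable_fp J D b xs"
  obtain s0 where s0: "0 < s0"
    and ray: "\<And>s. 0 \<le> s \<Longrightarrow> s < s0 \<Longrightarrow> tln_field J D b (xs + s *\<^sub>R v) = (s * lam) *\<^sub>R v"
    and ray_nonneg: "\<And>s. 0 \<le> s \<Longrightarrow> s < s0 \<Longrightarrow> nonneg_vec (xs + s *\<^sub>R v)"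
    using tln_field_along_eigenray[OF diag pos fp supp v_supp eigen silent] by blast
  define s1 where "s1 = s0 / 2"
  have nv: "0 < norm v" using v by simp
  have "0 < s1 * norm v" using s0 nv by (simp add: s1_def)
  then obtain d where d: "0 < d" and near: "\<And>x0 x. nonneg_vec x0 \<and> dist x0 xs < d \<and> tln_solution J D b x0 x
      \<Longrightarrow> (\<forall>t\<ge>0. dist (x t) xs < s1 * norm v)"
    using stable unfolding tln_stable_fp_def by blast
  define \<delta> where "\<delta> = min (s1/2) (d / (2 * norm v))"
  have \<delta>: "0 < \<delta>" "\<delta> < s1" "\<delta> * norm v < d" unfolding \<delta>_def s1_def using s0 d nv
    by (auto simp: min_def field_simps)
  define T where "T = ln (s1 / \<delta>) / lam"
  have T: "0 \<le> T" "\<delta> * exp (lam * T) = s1"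
    unfolding T_def using \<delta> lam by (auto intro!: divide_nonneg_pos ln_ge_zero)
  define x1 where "x1 t = xs + (\<delta> * exp (lam * t)) *\<^sub>R v" for t
  have x1: "(x1 has_vector_derivative tln_field J D b (x1 t)) (at t within {0..T})" if "t \<in> {0..T}" for t
  proof -
    have "exp (lam * t) \<le> exp (lam * T)" using that lam by simp
    then have "\<delta> * exp (lam * t) \<le> s1" using T(2) \<delta>(1) by (metis mult_left_mono less_imp_le)
    then have "tln_field J D b (x1 t) = (\<delta> * (exp (lam * t) * lam)) *\<^sub>R v"
      unfolding x1_def using ray[of "\<delta> * exp (lam * t)"] \<delta>(1) s0 by (simp add: s1_def algebra_simps)
    moreover have "(x1 has_vector_derivative (\<delta> * (exp (lam * t) * lam)) *\<^sub>R v) (at t within {0..T})"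
      unfolding x1_def by (auto intro!: derivative_eq_intros)
    ultimately show ?thesis by simp
  qed
  obtain L where "L-lipschitz_on UNIV (tln_field J D b)" by (rule tln_field_lipschitz)
  then obtain y where "y 0 = x1 T"
    and y: "\<And>t. 0 \<le> t \<Longrightarrow> (y has_vector_derivative tln_field J D b (y t)) (at t within {0..})"
    using lipschitz_autonomous_solution_exists[where a = "x1 T"] by blast
  define x where "x t = (if t \<le> T then x1 t else y (t - T))" for t
  have "tln_solution J D b (xs + \<delta> *\<^sub>R v) x"
    unfolding tln_solution_def x_def
    using solution_append[OF T(1) x1 \<open>y 0 = x1 T\<close> y] T(1) by (simp add: x1_def)
  moreover have "nonneg_vec (xs + \<delta> *\<^sub>R v)" using ray_nonneg \<delta> s0 by (simp add: s1_def)
  moreover have "dist (xs + \<delta> *\<^sub>R v) xs < d" using \<delta> by (simp add: dist_norm)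
  ultimately have "dist (x T) xs < s1 * norm v" using near[of "xs + \<delta> *\<^sub>R v" x] T(1) by simp
  moreover have "x T = xs + s1 *\<^sub>R v" unfolding x_def x1_def using T(2) by simp
  ultimately show False using s0 by (simp add: dist_norm s1_def)
qed

lemma not_tln_asymp_stable_fp_if_fixed_ray:
  fixes J D :: "real^'n::finite^'n"
  assumes diag: "\<forall>i j. i \<noteq> j \<longrightarrow> D$i$j = 0" and pos: "\<forall>i. 0 < D$i$i"
    and fp: "tln_fixed_point J D b xs" and supp: "supp_vec xs = \<sigma>"
    and u: "u \<noteq> 0" and u_supp: "\<And>i. i \<notin> \<sigma> \<Longrightarrow> u$i = 0"
    and kernel: "\<And>i. (J *v u)$i = D$i$i * u$i"
  shows "\<not> tln_asymp_stable_fp J D b xs"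
proof
  assume "tln_asymp_stable_fp J D b xs"
  then obtain d where d: "0 < d" and attract: "\<And>x0 x. nonneg_vec x0 \<and> dist x0 xs < d
      \<and> tln_solution J D b x0 x \<Longrightarrow> (x \<longlongrightarrow> xs) at_top"
    unfolding tln_asymp_stable_fp_def by blast
  have eigen: "(J *v u)$i - D$i$i * u$i = 0 * u$i" for i using kernel[of i] by simp
  have silent: "(J *v u)$i \<le> 0" if "i \<notin> \<sigma>" for i using kernel[of i] u_supp[OF that] by simp
  obtain s0 where s0: "0 < s0"
    and ray: "\<And>s. 0 \<le> s \<Longrightarrow> s < s0 \<Longrightarrow> tln_field J D b (xs + s *\<^sub>R u) = (s * 0) *\<^sub>R u"
    and ray_nonneg: "\<And>s. 0 \<le> s \<Longrightarrow> s < s0 \<Longrightarrow> nonneg_vec (xs + s *\<^sub>R u)"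
    using tln_field_along_eigenray[OF diag pos fp supp u_supp eigen silent] by blast
  have nu: "0 < norm u" using u by simp
  define s where "s = min (s0 / 2) (d / (2 * norm u))"
  have s: "0 < s" "s < s0" "s * norm u < d" unfolding s_def using s0 d nu
    by (auto simp: min_def field_simps)
  define z where "z = xs + s *\<^sub>R u"
  have "tln_solution J D b z (\<lambda>t. z)"
    unfolding tln_solution_def z_def using ray[of s] s by (auto intro: derivative_eq_intros)
  moreover have "nonneg_vec z" "dist z xs < d" using ray_nonneg[of s] s by (simp_all add: z_def dist_norm)
  ultimately have "((\<lambda>t::real. z) \<longlongrightarrow> xs) at_top" using attract by blast
  then have "z = xs" by (rule tendsto_unique[OF trivial_limit_at_top_linorder tendsto_const])
  then show False using s u unfolding z_def by simp
qed

lemma not_stable_set_if_kernel_vector: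
  fixes J D :: "real^'n::finite^'n"
  assumes diag: "\<forall>i j. i \<noteq> j \<longrightarrow> D$i$j = 0" and pos: "\<forall>i. 0 < D$i$i"
    and u: "u \<noteq> 0" and u_supp: "\<And>i. i \<notin> \<tau> \<Longrightarrow> u$i = 0"
    and kernel: "\<And>i. (J *v u)$i = D$i$i * u$i"
  shows "\<not> stable_set J D \<tau>"
proof
  assume "stable_set J D \<tau>"
  then obtain b xs where asym: "tln_asymp_stable_fp J D b xs" and supp: "supp_vec xs = \<tau>"
    unfolding stable_set_def by blast
  then have "tln_fixed_point J D b xs" unfolding tln_asymp_stable_fp_def tln_stable_fp_def by blast
  then show False
    using not_tln_asymp_stable_fp_if_fixed_ray[OF diag pos _ supp u u_supp kernel] asym by blast
qed

section \<open>Networks with J - D = -1\<close>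

lemma sum_sum_rank_one_form:
  fixes y w :: "'a \<Rightarrow> real"
  assumes "finite A"
  shows "(\<Sum>i\<in>A. \<Sum>j\<in>A. y i * (-1 + c * w i * w j - (if i = j then e else 0)) * y j)
         = - ((\<Sum>i\<in>A. y i)^2) + c * (\<Sum>i\<in>A. w i * y i)^2 - e * (\<Sum>i\<in>A. (y i)^2)"
proof -
  have "(\<Sum>i\<in>A. \<Sum>j\<in>A. y i * (-1 + c * w i * w j - (if i = j then e else 0)) * y j)
      = (\<Sum>i\<in>A. \<Sum>j\<in>A. c * ((w i * y i) * (w j * y j)) - y i * y j - (if j = i then e * (y i)^2 else 0))"
    by (intro sum.cong refl) (auto simp: algebra_simps power2_eq_square)
  also have "\<dots> = c * (\<Sum>i\<in>A. \<Sum>j\<in>A. (w i * y i) * (w j * y j)) - (\<Sum>i\<in>A. \<Sum>j\<in>A. y i * y j)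
      - e * (\<Sum>i\<in>A. (y i)^2)"
    using assms by (simp add: sum_subtractf sum_distrib_left)
  finally show ?thesis by (simp add: power2_eq_square sum_product)
qed

lemma square_diff_le_of_square_le:
  fixes p a r R :: real
  assumes p: "1 \<le> p" and r: "r^2 \<le> (p - 1) * R" and R: "0 \<le> R"
  shows "(p * a - r)^2 \<le> (p^2 + p - 1) * (a^2 + R)"
proof (cases "p = 1")
  case True
  then show ?thesis using r R by simp
next
  case False
  then have p1: "0 < p - 1" using p by simp
  have c0: "0 \<le> p^2 + p - 1" using p by (smt (verit) one_le_power)
  have id: "(p^2+p-1)*((p-1)*a^2) + (p^2+p-1)*r^2 - (p-1)*(p*a-r)^2 = ((p-1)*a+p*r)^2"
    by (simp add: power2_eq_square algebra_simps)
  have "(p^2+p-1)*r^2 \<le> (p^2+p-1)*((p-1)*R)" using r c0 by (rule mult_left_mono)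
  then have "0 \<le> (p^2+p-1)*((p-1)*a^2) + (p^2+p-1)*((p-1)*R) - (p-1)*(p*a-r)^2"
    using id by (smt (verit) zero_le_power2)
  also have "\<dots> = (p-1) * ((p^2+p-1)*(a^2+R) - (p*a - r)^2)" by (simp add: algebra_simps)
  finally show ?thesis using p1 by (simp add: zero_le_mult_iff)
qed

text \<open>The weight w = (p, -1, ..., -1) on a set of p + 1 elements has |w|^2 = p^2 + p;
  restricted to any proper subset its Cauchy-Schwarz constant drops to p^2 + p - 1.\<close>

lemma balanced_weight_sum_square_le:
  fixes y w :: "'a \<Rightarrow> real"
  assumes fin: "finite \<sigma>" and sub: "\<tau> \<subset> \<sigma>" and i0: "i0 \<in> \<sigma>"
    and card: "real (card \<sigma>) = p + 1" and p: "1 \<le> p"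
    and w: "w i0 = p" "\<And>i. i \<in> \<sigma> \<Longrightarrow> i \<noteq> i0 \<Longrightarrow> w i = -1"
  shows "(\<Sum>i\<in>\<tau>. w i * y i)^2 \<le> (p^2 + p - 1) * (\<Sum>i\<in>\<tau>. (y i)^2)"
proof -
  have fin\<tau>: "finite \<tau>" using fin sub finite_subset by blast
  have card\<tau>: "real (card \<tau>) + 1 \<le> p + 1"
    using psubset_card_mono[OF fin sub] card by linarith
  have minus: "(\<Sum>i\<in>R. w i * y i) = - sum y R" if "R \<subseteq> \<sigma> - {i0}" for R
  proof -
    have "(\<Sum>i\<in>R. w i * y i) = (\<Sum>i\<in>R. - y i)"
    proof (rule sum.cong[OF refl])
      fix i assume "i \<in> R"
      then have "w i = -1" using w(2) that by blast
      then show "w i * y i = - y i" by simp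
    qed
    then show ?thesis by (simp add: sum_negf)
  qed
  show ?thesis
  proof (cases "i0 \<in> \<tau>")
    case False
    then have "\<tau> \<subseteq> \<sigma> - {i0}" using sub by blast
    then have "(\<Sum>i\<in>\<tau>. w i * y i)^2 = (sum y \<tau>)^2" by (simp add: minus)
    also have "\<dots> \<le> (\<Sum>i\<in>\<tau>. (y i)^2) * real (card \<tau>)" by (rule sum_squared_le_sum_of_squares)
    also have "\<dots> \<le> (\<Sum>i\<in>\<tau>. (y i)^2) * (p^2 + p - 1)"
      using card\<tau> one_le_power[OF p, of 2] by (intro mult_left_mono sum_nonneg) auto
    finally show ?thesis by (simp add: mult.commute)
  next
    case True
    define R where "R = \<tau> - {i0}"
    have "card R = card \<tau> - 1" "0 < card \<tau>"
      unfolding R_def using fin\<tau> True by (auto simp: card_gt_0_iff)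
    then have R: "R \<subseteq> \<sigma> - {i0}" "finite R" "real (card R) \<le> p - 1"
      unfolding R_def using sub fin\<tau> card\<tau> by (auto simp: of_nat_diff)
    have split: "sum f \<tau> = f i0 + sum f R" for f :: "'a \<Rightarrow> real"
      unfolding R_def using True fin\<tau> by (simp add: sum.remove)
    have "(sum y R)^2 \<le> (\<Sum>i\<in>R. (y i)^2) * real (card R)" by (rule sum_squared_le_sum_of_squares)
    also have "\<dots> \<le> (p - 1) * (\<Sum>i\<in>R. (y i)^2)"
      using mult_right_mono[OF R(3), of "\<Sum>i\<in>R. (y i)^2"] by (simp add: mult.commute sum_nonneg)
    finally have "(p * y i0 - sum y R)^2 \<le> (p^2 + p - 1) * ((y i0)^2 + (\<Sum>i\<in>R. (y i)^2))"
      using p by (intro square_diff_le_of_square_le) (auto intro: sum_nonneg)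
    then show ?thesis unfolding split[of "\<lambda>i. w i * y i"] split[of "\<lambda>i. (y i)^2"] minus[OF R(1)] w(1)
      by simp
  qed
qed

lemma matrix_vector_mult_all_minus_one:
  fixes J D :: "real^'n::finite^'n"
  assumes diag: "\<forall>i j. i \<noteq> j \<longrightarrow> D$i$j = 0" and W: "\<forall>i j. J$i$j = D$i$j - 1"
  shows "(J *v x)$i = D$i$i * x$i - (\<Sum>j\<in>UNIV. x$j)"
proof -
  have "(J *v x)$i = (\<Sum>j\<in>UNIV. D$i$j * x$j - x$j)"
    unfolding matrix_vector_mult_def using W by (simp add: left_diff_distrib)
  also have "\<dots> = (D *v x)$i - (\<Sum>j\<in>UNIV. x$j)"
    by (simp add: sum_subtractf matrix_vector_mult_def)
  finally show ?thesis by (simp add: matrix_vector_mult_diagonal[OF diag])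
qed

text \<open>The inhibition of i0 by the neurons outside \<sigma> makes e_j - e_i0 a kernel vector of J + A - D
  for every j outside \<sigma>.\<close>

lemma exists_perturbation_maximally_stable:
  fixes J D :: "real^'n::finite^'n"
  assumes diag: "\<forall>i j. i \<noteq> j \<longrightarrow> D$i$j = 0" and pos: "\<forall>i. 0 < D$i$i"
    and W: "\<forall>i j. J$i$j = D$i$j - 1" and i0: "i0 \<in> \<sigma>" and e: "0 < e"
  shows "\<exists>A. eps_perturbation e A \<and> maximally_stable_clique (J + A) D \<sigma>"
proof (intro exI conjI)
  define A :: "real^'n^'n" where
    "A = (\<chi> i j. if (i \<in> \<sigma> \<and> j = i) \<or> (i = i0 \<and> j \<notin> \<sigma>) then -e else 0)"
  show "eps_perturbation e A" unfolding eps_perturbation_def A_def using e by auto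
  have entry: "(J + A)$i$j - D$i$j = -1 + A$i$j" for i j using W by simp
  have "stable_set (J + A) D \<sigma>"
  proof (rule stable_set_if_negative_definite[OF diag pos _ e])
    fix y :: "'n \<Rightarrow> real"
    have "(\<Sum>i\<in>\<sigma>. \<Sum>j\<in>\<sigma>. y i * ((J + A)$i$j - D$i$j) * y j)
        = (\<Sum>i\<in>\<sigma>. \<Sum>j\<in>\<sigma>. y i * (-1 - (if i = j then e else 0)) * y j)"
      unfolding entry by (intro sum.cong refl) (auto simp: A_def)
    also have "\<dots> = - ((\<Sum>i\<in>\<sigma>. y i)^2) - e * (\<Sum>i\<in>\<sigma>. (y i)^2)"
      using sum_sum_rank_one_form[of \<sigma> y 0 "\<lambda>_. 0" e] by simp
    also have "\<dots> \<le> -e * (\<Sum>i\<in>\<sigma>. (y i)^2)" by simp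
    finally show "(\<Sum>i\<in>\<sigma>. \<Sum>j\<in>\<sigma>. y i * ((J + A)$i$j - D$i$j) * y j) \<le> -e * (\<Sum>i\<in>\<sigma>. (y i)^2)" .
  qed (use i0 in auto)
  moreover have "\<not> stable_set (J + A) D \<tau>" if sub: "\<sigma> \<subset> \<tau>" for \<tau>
  proof -
    obtain j where j: "j \<in> \<tau>" "j \<notin> \<sigma>" using sub by blast
    define u :: "real^'n" where "u = axis j 1 - axis i0 1"
    have u: "u$i = (if i = j then 1 else 0) - (if i = i0 then 1 else 0)" for i
      unfolding u_def by (simp add: axis_def)
    show ?thesis
    proof (rule not_stable_set_if_kernel_vector[OF diag pos])
      have "u$j = 1" using u[of j] j i0 by auto
      then show "u \<noteq> 0" by (metis one_neq_zero zero_index)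
      show "u$i = 0" if "i \<notin> \<tau>" for i using u[of i] that j i0 sub by auto
      fix i
      have "((J + A) *v u)$i = (J + A)$i$j - (J + A)$i$i0"
        unfolding u_def by (simp add: matrix_vector_mult_diff_distrib matrix_vector_mult_basis column_def)
      also have "\<dots> = D$i$j - D$i$i0" using entry[of i j] entry[of i i0] j i0 by (auto simp: A_def)
      also have "\<dots> = D$i$i * u$i" using diag u[of i] j i0 by (cases "i = j"; cases "i = i0") auto
      finally show "((J + A) *v u)$i = D$i$i * u$i" .
    qed
  qed
  ultimately show "maximally_stable_clique (J + A) D \<sigma>" unfolding maximally_stable_clique_def by blast
qed

definition balanced_weight :: "'n::finite set \<Rightarrow> 'n \<Rightarrow> real^'n" where
  "balanced_weight \<sigma> i0 = (\<chi> i. if i = i0 then real (card \<sigma>) - 1 else if i \<in> \<sigma> then -1 else 0)"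

lemma sum_balanced_weight:
  assumes i0: "i0 \<in> \<sigma>"
  shows "(\<Sum>j\<in>UNIV. balanced_weight \<sigma> i0 $ j) = 0"
    and "(\<Sum>j\<in>\<sigma>. (balanced_weight \<sigma> i0 $ j)^2) = (real (card \<sigma>) - 1)^2 + (real (card \<sigma>) - 1)"
proof -
  let ?w = "balanced_weight \<sigma> i0"
  have "1 \<le> card \<sigma>" using i0 card_gt_0_iff[of \<sigma>] by auto
  then have card: "real (card (\<sigma> - {i0})) = real (card \<sigma>) - 1"
    using i0 by (simp add: of_nat_diff)
  have rest: "(\<Sum>j\<in>\<sigma> - {i0}. f (?w $ j)) = f (-1) * (real (card \<sigma>) - 1)" for f :: "real \<Rightarrow> real"
  proof -
    have "(\<Sum>j\<in>\<sigma> - {i0}. f (?w $ j)) = (\<Sum>j\<in>\<sigma> - {i0}. f (-1))"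
      by (intro sum.cong) (auto simp: balanced_weight_def)
    then show ?thesis by (simp only: sum_constant card mult.commute)
  qed
  have "(\<Sum>j\<in>UNIV. ?w $ j) = (\<Sum>j\<in>\<sigma>. ?w $ j)"
    by (rule sum.mono_neutral_right) (use i0 in \<open>auto simp: balanced_weight_def\<close>)
  also have "\<dots> = ?w $ i0 + (\<Sum>j\<in>\<sigma> - {i0}. ?w $ j)" using i0 by (simp add: sum.remove)
  finally show "(\<Sum>j\<in>UNIV. ?w $ j) = 0" using rest[of id] by (simp add: balanced_weight_def)
  have "(\<Sum>j\<in>\<sigma>. (?w $ j)^2) = (?w $ i0)^2 + (\<Sum>j\<in>\<sigma> - {i0}. (?w $ j)^2)"
    using i0 by (simp add: sum.remove)
  then show "(\<Sum>j\<in>\<sigma>. (?w $ j)^2) = (real (card \<sigma>) - 1)^2 + (real (card \<sigma>) - 1)"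
    using rest[of "\<lambda>x. x^2"] by (simp add: balanced_weight_def)
qed

definition rank_one_perturbation :: "real \<Rightarrow> real \<Rightarrow> 'n::finite set \<Rightarrow> real^'n \<Rightarrow> real^'n^'n" where
  "rank_one_perturbation \<epsilon> \<beta> \<sigma> w =
     (\<chi> i j. if i \<in> \<sigma> \<and> j \<in> \<sigma> then \<epsilon> * (\<beta> * w$i * w$j - (if i = j then 1 else 0)) else 0)"

lemma rank_one_perturbation_mult_self:
  assumes "\<And>i. i \<notin> \<sigma> \<Longrightarrow> w$i = 0"
  shows "(rank_one_perturbation \<epsilon> \<beta> \<sigma> w *v w)$i = \<epsilon> * (\<beta> * (\<Sum>j\<in>\<sigma>. (w$j)^2) - 1) * w$i"
proof (cases "i \<in> \<sigma>")
  case True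
  have "(rank_one_perturbation \<epsilon> \<beta> \<sigma> w *v w)$i
      = (\<Sum>j\<in>\<sigma>. \<epsilon> * \<beta> * w$i * (w$j)^2 - (if j = i then \<epsilon> * w$i else 0))"
    unfolding matrix_vector_mult_def rank_one_perturbation_def
    by (simp, rule sum.mono_neutral_cong_right) (use True in \<open>auto simp: power2_eq_square algebra_simps\<close>)
  also have "\<dots> = \<epsilon> * (\<beta> * (\<Sum>j\<in>\<sigma>. (w$j)^2) - 1) * w$i"
    using True by (simp add: sum_subtractf sum_distrib_left algebra_simps)
  finally show ?thesis .
qed (simp add: assms matrix_vector_mult_def rank_one_perturbation_def)

lemma abs_rank_one_perturbation_le:
  assumes \<epsilon>: "0 \<le> \<epsilon>" and \<beta>: "0 \<le> \<beta>" and w: "\<And>i. \<bar>w$i\<bar> \<le> p" and p: "\<beta> * p^2 \<le> 1"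
  shows "\<bar>rank_one_perturbation \<epsilon> \<beta> \<sigma> w $ i $ j\<bar> \<le> \<epsilon>"
proof -
  have "\<beta> * \<bar>w$i * w$j\<bar> \<le> \<beta> * p^2"
    unfolding abs_mult power2_eq_square using \<beta> w[of i] w[of j]
    by (intro mult_left_mono mult_mono) (auto intro: order_trans[OF abs_ge_zero])
  then have "\<bar>\<beta> * w$i * w$j - (if i = j then 1 else 0)\<bar> \<le> 1"
    using p \<beta> by (cases "i = j") (auto simp: abs_le_iff abs_mult power2_eq_square mult.assoc)
  then show ?thesis
    unfolding rank_one_perturbation_def using \<epsilon> by (auto simp: abs_mult intro: mult_left_le)
qed

lemma balanced_weight_nth:
  assumes "i0 \<in> \<sigma>"
  shows "balanced_weight \<sigma> i0 $ i0 = real (card \<sigma>) - 1"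
    and "i \<in> \<sigma> \<Longrightarrow> i \<noteq> i0 \<Longrightarrow> balanced_weight \<sigma> i0 $ i = -1"
    and "i \<notin> \<sigma> \<Longrightarrow> balanced_weight \<sigma> i0 $ i = 0"
  using assms unfolding balanced_weight_def by auto

lemma quadratic_form_rank_one_perturbation_le:
  fixes J D :: "real^'n::finite^'n"
  assumes W: "\<forall>i j. J$i$j = D$i$j - 1" and sub: "\<tau> \<subset> \<sigma>" and i0: "i0 \<in> \<sigma>"
    and p: "1 \<le> p" "real (card \<sigma>) = p + 1" and \<beta>: "0 < \<beta>" "\<beta> * (p^2 + p - 1/2) = 1"
    and \<epsilon>: "0 < \<epsilon>"
  defines "A \<equiv> rank_one_perturbation \<epsilon> \<beta> \<sigma> (balanced_weight \<sigma> i0)"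
  shows "(\<Sum>i\<in>\<tau>. \<Sum>j\<in>\<tau>. y i * ((J + A)$i$j - D$i$j) * y j) \<le> - (\<epsilon> * \<beta> / 2) * (\<Sum>i\<in>\<tau>. (y i)^2)"
proof -
  define w where "w = balanced_weight \<sigma> i0"
  have "(\<Sum>i\<in>\<tau>. \<Sum>j\<in>\<tau>. y i * ((J + A)$i$j - D$i$j) * y j)
      = (\<Sum>i\<in>\<tau>. \<Sum>j\<in>\<tau>. y i * (-1 + (\<epsilon> * \<beta>) * w$i * w$j - (if i = j then \<epsilon> else 0)) * y j)"
    using W sub by (intro sum.cong refl) (auto simp: A_def w_def rank_one_perturbation_def right_diff_distrib)
  also have "\<dots> = - ((\<Sum>i\<in>\<tau>. y i)^2) + (\<epsilon> * \<beta>) * (\<Sum>i\<in>\<tau>. w$i * y i)^2 - \<epsilon> * (\<Sum>i\<in>\<tau>. (y i)^2)"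
    by (rule sum_sum_rank_one_form) simp
  also have "\<dots> \<le> (\<epsilon> * \<beta>) * ((p^2 + p - 1) * (\<Sum>i\<in>\<tau>. (y i)^2)) - \<epsilon> * (\<Sum>i\<in>\<tau>. (y i)^2)"
  proof -
    have "(\<Sum>i\<in>\<tau>. w$i * y i)^2 \<le> (p^2 + p - 1) * (\<Sum>i\<in>\<tau>. (y i)^2)"
      by (rule balanced_weight_sum_square_le[OF _ sub i0 p(2) p(1)])
        (use balanced_weight_nth[OF i0] p(2) in \<open>auto simp: w_def\<close>)
    then have "(\<epsilon> * \<beta>) * (\<Sum>i\<in>\<tau>. w$i * y i)^2 \<le> (\<epsilon> * \<beta>) * ((p^2 + p - 1) * (\<Sum>i\<in>\<tau>. (y i)^2))"
      using \<epsilon> \<beta>(1) by (intro mult_left_mono) auto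
    then show ?thesis using zero_le_power2[of "\<Sum>i\<in>\<tau>. y i"] by linarith
  qed
  also have "\<dots> = \<epsilon> * (\<beta> * (p^2 + p - 1) - 1) * (\<Sum>i\<in>\<tau>. (y i)^2)"
    by (simp add: algebra_simps)
  also have "\<beta> * (p^2 + p - 1) = 1 - \<beta> / 2" using \<beta>(2) by (simp add: algebra_simps)
  finally show ?thesis by simp
qed

text \<open>With w the balanced weight, the perturbation \<epsilon> (\<beta> w w^T - I) on \<sigma> leaves the all-minus-one
  part blind to w (its entries sum to 0) and gives w the positive eigenvalue \<epsilon> \<beta>/2, by the choice
  \<beta> (p^2 + p - 1/2) = 1; on proper subsets the drop of the Cauchy-Schwarz constant to p^2 + p - 1
  keeps the form negative definite.\<close>

lemma exists_perturbation_minimally_unstable: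
  fixes J D :: "real^'n::finite^'n"
  assumes diag: "\<forall>i j. i \<noteq> j \<longrightarrow> D$i$j = 0" and pos: "\<forall>i. 0 < D$i$i"
    and W: "\<forall>i j. J$i$j = D$i$j - 1" and card: "2 \<le> card \<sigma>" and e: "0 < e"
  shows "\<exists>A. eps_perturbation e A \<and> minimally_unstable_clique (J + A) D \<sigma>"
proof -
  obtain i0 where i0: "i0 \<in> \<sigma>" using card by fastforce
  define p where "p = real (card \<sigma>) - 1"
  have p: "1 \<le> p" "real (card \<sigma>) = p + 1" unfolding p_def using card by auto
  define \<beta> where "\<beta> = 1 / (p^2 + p - 1/2)"
  have "0 < p^2 + p - 1/2" using one_le_power[OF p(1), of 2] p(1) by linarith
  then have \<beta>: "0 < \<beta>" "\<beta> * (p^2 + p - 1/2) = 1" unfolding \<beta>_def by auto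
  define \<epsilon> where "\<epsilon> = min e 1"
  have \<epsilon>: "0 < \<epsilon>" "\<epsilon> \<le> e" unfolding \<epsilon>_def using e by auto
  define w where "w = balanced_weight \<sigma> i0"
  note w = balanced_weight_nth[OF i0, folded w_def p_def]
  define A where "A = rank_one_perturbation \<epsilon> \<beta> \<sigma> w"
  have "eps_perturbation e A"
    unfolding eps_perturbation_def A_def
  proof (intro allI order_trans[OF abs_rank_one_perturbation_le \<epsilon>(2)])
    show "\<bar>w$i\<bar> \<le> p" for i using w p(1) by (cases "i = i0"; cases "i \<in> \<sigma>") auto
    have "\<beta> * p^2 \<le> \<beta> * (p^2 + p - 1/2)" using \<beta>(1) p(1) by (intro mult_left_mono) auto
    then show "\<beta> * p^2 \<le> 1" using \<beta>(2) by simp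
  qed (use \<epsilon> \<beta> in auto)
  have "\<epsilon> * (\<beta> * (\<Sum>j\<in>\<sigma>. (w$j)^2) - 1) = \<epsilon> * \<beta> / 2"
    using sum_balanced_weight(2)[OF i0] \<beta>(2) unfolding w_def[symmetric] p_def[symmetric]
    by (simp add: algebra_simps)
  then have "(A *v w)$i = \<epsilon> * \<beta> / 2 * w$i" for i
    unfolding A_def using rank_one_perturbation_mult_self[of \<sigma> w] w(3) by metis
  then have eigen: "((J + A) *v w)$i = D$i$i * w$i + \<epsilon> * \<beta> / 2 * w$i" for i
    using sum_balanced_weight(1)[OF i0]
    by (simp add: matrix_vector_mult_add_rdistrib matrix_vector_mult_all_minus_one[OF diag W] w_def)
  have "\<not> tln_stable_fp (J + A) D b xs" if "tln_fixed_point (J + A) D b xs" "supp_vec xs = \<sigma>" for b xs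
  proof (rule not_tln_stable_fp_if_expanding_eigenray[OF diag pos that, where lam = "\<epsilon> * \<beta> / 2"])
    show "w \<noteq> 0" using w(1) p(1) by (metis zero_index not_one_le_zero)
  qed (use w(3) eigen \<epsilon> \<beta> in simp_all)
  then have "\<not> (\<exists>b xs. tln_stable_fp (J + A) D b xs \<and> supp_vec xs = \<sigma>)"
    unfolding tln_stable_fp_def by blast
  then have "unstable_set (J + A) D \<sigma>"
    using i0 unfolding unstable_set_def marginal_set_def stable_set_def tln_asymp_stable_fp_def by blast
  moreover have "stable_set (J + A) D \<tau>" if "\<tau> \<subset> \<sigma>" "\<tau> \<noteq> {}" for \<tau>
  proof (rule stable_set_if_negative_definite[OF diag pos that(2)])
    show "(\<Sum>i\<in>\<tau>. \<Sum>j\<in>\<tau>. y i * ((J + A)$i$j - D$i$j) * y j) \<le> - (\<epsilon> * \<beta> / 2) * (\<Sum>i\<in>\<tau>. (y i)^2)"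
      for y unfolding A_def w_def by (rule quadratic_form_rank_one_perturbation_le[OF W that(1) i0 p \<beta> \<epsilon>(1)])
  qed (use \<epsilon> \<beta> in simp)
  ultimately have "minimally_unstable_clique (J + A) D \<sigma>"
    unfolding minimally_unstable_clique_def unstable_set_def by blast
  with \<open>eps_perturbation e A\<close> show ?thesis by blast
qed

lemma singleton_not_flexible_clique:
  fixes J D :: "real^'n::finite^'n"
  assumes diag: "\<forall>i j. i \<noteq> j \<longrightarrow> D$i$j = 0" and pos: "\<forall>i. 0 < D$i$i"
    and W: "\<forall>i j. J$i$j = D$i$j - 1"
  shows "\<not> flexible_clique J D {k}"
proof
  assume "flexible_clique J D {k}"
  then obtain A where A: "eps_perturbation (1/2) A" and unstable: "minimally_unstable_clique (J + A) D {k}"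
    unfolding flexible_clique_def by (meson half_gt_zero zero_less_one)
  have "stable_set (J + A) D {k}"
  proof (rule stable_set_if_negative_definite[OF diag pos])
    fix y :: "'n \<Rightarrow> real"
    have "A$k$k \<le> 1/2" using A unfolding eps_perturbation_def by (meson abs_le_D1)
    then have "(J + A)$k$k - D$k$k \<le> - (1/2)" using W by simp
    then have "((J + A)$k$k - D$k$k) * (y k)^2 \<le> - (1/2) * (y k)^2"
      by (rule mult_right_mono) simp
    then show "(\<Sum>i\<in>{k}. \<Sum>j\<in>{k}. y i * ((J + A)$i$j - D$i$j) * y j) \<le> - (1/2) * (\<Sum>i\<in>{k}. (y i)^2)"
      by (simp add: power2_eq_square mult_ac)
  qed simp_all
  then show False using unstable unfolding minimally_unstable_clique_def unstable_set_def by blast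
qed

lemma empty_not_flexible_clique: "\<not> flexible_clique J D {}"
proof
  assume "flexible_clique J D {}"
  then obtain A where "maximally_stable_clique (J + A) D {}"
    unfolding flexible_clique_def using zero_less_one by blast
  then show False unfolding maximally_stable_clique_def stable_set_def by simp
qed

lemma flexible_clique_iff_card_ge_2:
  fixes J D :: "real^'n::finite^'n"
  assumes diag: "\<forall>i j. i \<noteq> j \<longrightarrow> D$i$j = 0" and pos: "\<forall>i. 0 < D$i$i"
    and W: "\<forall>i j. J$i$j = D$i$j - 1"
  shows "flexible_clique J D \<sigma> \<longleftrightarrow> 2 \<le> card \<sigma>"
proof
  assume flexible: "flexible_clique J D \<sigma>"
  show "2 \<le> card \<sigma>"
  proof (rule ccontr)
    assume "\<not> 2 \<le> card \<sigma>"
    then consider "card \<sigma> = 0" | "card \<sigma> = 1" by linarith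
    then show False
    proof cases
      case 1
      then show False using flexible empty_not_flexible_clique[of J D] by simp
    next
      case 2
      then obtain k where "\<sigma> = {k}" by (auto simp: card_1_singleton_iff)
      then show False using flexible singleton_not_flexible_clique[OF diag pos W] by simp
    qed
  qed
next
  assume card: "2 \<le> card \<sigma>"
  then obtain i0 where i0: "i0 \<in> \<sigma>" by fastforce
  show "flexible_clique J D \<sigma>"
    unfolding flexible_clique_def
  proof (intro allI impI)
    fix e :: real assume e: "0 < e"
    obtain As where "eps_perturbation e As" "maximally_stable_clique (J + As) D \<sigma>"
      using exists_perturbation_maximally_stable[OF diag pos W i0 e] by blast
    moreover obtain Au where "eps_perturbation e Au" "minimally_unstable_clique (J + Au) D \<sigma>"
      using exists_perturbation_minimally_unstable[OF diag pos W card e] by blast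
    ultimately show "\<exists>As Au. eps_perturbation e As \<and> eps_perturbation e Au \<and>
        maximally_stable_clique (J + As) D \<sigma> \<and> minimally_unstable_clique (J + Au) D \<sigma>"
      by blast
  qed
qed

lemma card_subsets_card_ge_2: "card {\<sigma>::'n::finite set. 2 \<le> card \<sigma>} = 2 ^ CARD('n) - CARD('n) - 1"
proof -
  define A2 where "A2 = {\<sigma>::'n set. 2 \<le> card \<sigma>}"
  define A1 where "A1 = {\<sigma>::'n set. card \<sigma> = 1}"
  define A0 where "A0 = {\<sigma>::'n set. card \<sigma> = 0}"
  have "card \<sigma> = 0 \<or> card \<sigma> = 1 \<or> 2 \<le> card \<sigma>" for \<sigma> :: "'n set" by arith
  then have U: "(UNIV :: 'n set set) = A2 \<union> (A1 \<union> A0)" unfolding A2_def A1_def A0_def by blast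
  have "card (UNIV :: 'n set set) = card A2 + (card A1 + card A0)"
    unfolding U by (subst card_Un_disjoint, auto simp: A2_def A1_def A0_def card_Un_disjoint)
  moreover have "card A1 = CARD('n)" using n_subsets[of "UNIV::'n set" 1] unfolding A1_def by simp
  moreover have "A0 = {{}}" unfolding A0_def by auto
  moreover have "card (UNIV :: 'n set set) = 2 ^ CARD('n)" using card_Pow[of "UNIV :: 'n set"] by simp
  ultimately show ?thesis unfolding A2_def by simp
qed

theorem mainTheorem16:
  fixes J D :: "real^'n::finite^'n"
  assumes "tln_network J D"
    and "- D + J = (\<chi> i j. -1)"
  shows "(\<forall>\<sigma>::'n set. 2 \<le> card \<sigma> \<longrightarrow> flexible_clique J D \<sigma>)
         \<and> flex J D = 2 ^ CARD('n) - CARD('n) - 1"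
proof -
  have diag: "\<forall>i j. i \<noteq> j \<longrightarrow> D$i$j = 0" and pos: "\<forall>i. 0 < D$i$i"
    using assms(1) unfolding tln_network_def by auto
  have "(- D + J)$i$j = -1" for i j using assms(2) by simp
  then have entry: "J$i$j - D$i$j = -1" for i j by simp
  have "\<forall>i j. J$i$j = D$i$j - 1" using entry by (simp add: algebra_simps)
  then have flexible: "flexible_clique J D \<sigma> \<longleftrightarrow> 2 \<le> card \<sigma>" for \<sigma> :: "'n set"
    by (rule flexible_clique_iff_card_ge_2[OF diag pos])
  then have "Collect (flexible_clique J D) = {\<sigma>. 2 \<le> card \<sigma>}" by blast
  then show ?thesis using flexible card_subsets_card_ge_2[where 'n = 'n] unfolding flex_def by simp
qed

end
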